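(* Let $(V,h)$ be a real quadratic space with $d=\dim_\mathbb{R}V$ odd, and let $\gamma:\mathrm{Cl}(V,h)\to\mathrm{End}_\mathbb{C}(S)$ be an irreducible complex Clifford representation, with $\mathbb{C}$-linear extension $\gamma_\mathbb{C}:\mathbb{C}\mathrm{l}(V,h)\to\mathrm{End}_\mathbb{C}(S)$. Then $\gamma_\mathbb{C}$ restricts to a group isomorphism from $\Gamma^s(V,h)\simeq\mathrm{Spin}^c(V,h)\cdot\mathbb{C}^\times$ onto $\mathrm{L}_\gamma$. In particular, $\mathrm{L}_\gamma$ is homotopy-equivalent to $\mathrm{Spin}^c(V,h)$.
   Context: $\mathrm{Cl}(V,h)$ is the real Clifford algebra of $(V,h)$ and $\mathbb{C}\mathrm{l}(V,h)=\mathrm{Cl}(V,h)\otimes_\mathbb{R}\mathbb{C}$, with even part $\mathbb{C}\mathrm{l}^+(V,h)$. Let $\pi_\mathbb{C}$ be the complex-linear parity involution, $\tau_\mathbb{C}$ the antilinear extension of the reversion, $\tilde\tau_\mathbb{C}=\tau_\mathbb{C}\circ\pi_\mathbb{C}$, $N(x)=\tilde\tau_\mathbb{C}(x)x$, and $\widetilde{\mathrm{Ad}}(x)(y)=\pi_\mathbb{C}(x)yx^{-1}$. The complex Clifford group is $\Gamma(V,h)=\{x\in\mathbb{C}\mathrm{l}(V,h)^\times\,|\,\widetilde{\mathrm{Ad}}(x)(V)=V\}$, $\Gamma^s(V,h)=\Gamma(V,h)\cap\mathbb{C}\mathrm{l}^+(V,h)$, and $\mathrm{Spin}^c(V,h)=\ker(|N|:\Gamma^s(V,h)\to\mathbb{R}_{>0})$;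 $\mathrm{Spin}^c(V,h)\cdot\mathbb{C}^\times$ denotes the subgroup of products of elements of $\mathrm{Spin}^c(V,h)$ with nonzero complex scalars. A complex Clifford representation is a unital real-algebra morphism $\mathrm{Cl}(V,h)\to\mathrm{End}_\mathbb{C}(S)$. The complex Lipschitz group is $\mathrm{L}_\gamma=\{\varphi\in\mathrm{Aut}_\mathbb{C}(S)\,|\,\varphi\gamma(V)\varphi^{-1}=\gamma(V)\}$. *)

theory Defs
  imports "HOL-Analysis.Analysis" "Jordan_Normal_Form.Matrix"
begin

text \<open>Model of a real quadratic space of dimension d: V = R^d with the diagonal
form h(x,y) = sum_i eps_i x_i y_i, eps_i nonzero for i < d (every nondegenerate
real quadratic space is isometric to such a one).  Clifford algebra elements are
coefficient functions on the basis e_A, A a subset of {0..<d}; e_A e_B is given by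
the usual sign rule, with e_i e_i = h(e_i,e_i) = eps_i.\<close>

type_synonym 'a cl = "nat set \<Rightarrow> 'a"

definition cl_carrier :: "nat \<Rightarrow> ('a::zero) cl set" where
  "cl_carrier d = {x. \<forall>A. \<not> A \<subseteq> {..<d} \<longrightarrow> x A = 0}"

definition cl_sign :: "(nat \<Rightarrow> real) \<Rightarrow> nat set \<Rightarrow> nat set \<Rightarrow> real" where
  "cl_sign eps A B = (-1) ^ card {(a,b). a \<in> A \<and> b \<in> B \<and> b < a} * (\<Prod>i\<in>A \<inter> B. eps i)"

definition cl_mult :: "nat \<Rightarrow> (nat \<Rightarrow> real) \<Rightarrow> ('a::real_algebra_1) cl \<Rightarrow> 'a cl \<Rightarrow> 'a cl" where
  "cl_mult d eps x y = (\<lambda>C. if C \<subseteq> {..<d} then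
     (\<Sum>A\<in>Pow {..<d}. \<Sum>B\<in>Pow {..<d}.
        if (A - B) \<union> (B - A) = C then of_real (cl_sign eps A B) * x A * y B else 0)
     else 0)"

definition cl_scal :: "'a::zero \<Rightarrow> 'a cl" where
  "cl_scal c = (\<lambda>A. if A = {} then c else 0)"

definition cl_basis :: "nat set \<Rightarrow> ('a::{zero,one}) cl" where
  "cl_basis A = (\<lambda>B. if B = A then 1 else 0)"

definition cl_vecs :: "nat \<Rightarrow> real cl set" where
  "cl_vecs d = {x \<in> cl_carrier d. \<forall>A. card A \<noteq> 1 \<longrightarrow> x A = 0}"

definition cl_complexify :: "real cl \<Rightarrow> complex cl" where
  "cl_complexify x = (\<lambda>A. complex_of_real (x A))"

definition cl_even :: "nat \<Rightarrow> complex cl set" where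
  "cl_even d = {x \<in> cl_carrier d. \<forall>A. odd (card A) \<longrightarrow> x A = 0}"

definition cl_par :: "complex cl \<Rightarrow> complex cl" where
  "cl_par x = (\<lambda>A. (-1) ^ card A * x A)"

definition cl_rev :: "complex cl \<Rightarrow> complex cl" where
  "cl_rev x = (\<lambda>A. (-1) ^ (card A * (card A - 1) div 2) * cnj (x A))"

definition cl_tilde_rev :: "complex cl \<Rightarrow> complex cl" where
  "cl_tilde_rev x = cl_rev (cl_par x)"

definition cl_N :: "nat \<Rightarrow> (nat \<Rightarrow> real) \<Rightarrow> complex cl \<Rightarrow> complex cl" where
  "cl_N d eps x = cl_mult d eps (cl_tilde_rev x) x"

definition cl_units :: "nat \<Rightarrow> (nat \<Rightarrow> real) \<Rightarrow> complex cl set" where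
  "cl_units d eps = {x \<in> cl_carrier d. \<exists>y \<in> cl_carrier d.
      cl_mult d eps x y = cl_scal 1 \<and> cl_mult d eps y x = cl_scal 1}"

definition cl_inverse :: "nat \<Rightarrow> (nat \<Rightarrow> real) \<Rightarrow> complex cl \<Rightarrow> complex cl" where
  "cl_inverse d eps x = (THE y. y \<in> cl_carrier d \<and>
      cl_mult d eps x y = cl_scal 1 \<and> cl_mult d eps y x = cl_scal 1)"

definition tilde_Ad :: "nat \<Rightarrow> (nat \<Rightarrow> real) \<Rightarrow> complex cl \<Rightarrow> complex cl \<Rightarrow> complex cl" where
  "tilde_Ad d eps x y = cl_mult d eps (cl_mult d eps (cl_par x) y) (cl_inverse d eps x)"

definition clifford_group :: "nat \<Rightarrow> (nat \<Rightarrow> real) \<Rightarrow> complex cl set" where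
  "clifford_group d eps = {x \<in> cl_units d eps.
      tilde_Ad d eps x ` (cl_complexify ` cl_vecs d) = cl_complexify ` cl_vecs d}"

definition special_clifford_group :: "nat \<Rightarrow> (nat \<Rightarrow> real) \<Rightarrow> complex cl set" where
  "special_clifford_group d eps = clifford_group d eps \<inter> cl_even d"

text \<open>Spin^c = kernel of |N| on Gamma^s (N takes scalar values there).\<close>
definition spinc :: "nat \<Rightarrow> (nat \<Rightarrow> real) \<Rightarrow> complex cl set" where
  "spinc d eps = {x \<in> special_clifford_group d eps.
      \<exists>c. cl_N d eps x = cl_scal c \<and> cmod c = 1}"

definition spinc_times_Cx :: "nat \<Rightarrow> (nat \<Rightarrow> real) \<Rightarrow> complex cl set" where
  "spinc_times_Cx d eps = {cl_mult d eps s (cl_scal c) | s c. s \<in> spinc d eps \<and> c \<noteq> 0}"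

definition is_cl_rep :: "nat \<Rightarrow> (nat \<Rightarrow> real) \<Rightarrow> nat \<Rightarrow> (real cl \<Rightarrow> complex mat) \<Rightarrow> bool" where
  "is_cl_rep d eps n g \<longleftrightarrow>
     (\<forall>x \<in> cl_carrier d. g x \<in> carrier_mat n n) \<and>
     g (cl_scal 1) = 1\<^sub>m n \<and>
     (\<forall>x \<in> cl_carrier d. \<forall>y \<in> cl_carrier d. g (\<lambda>A. x A + y A) = g x + g y) \<and>
     (\<forall>r. \<forall>x \<in> cl_carrier d. g (\<lambda>A. r * x A) = complex_of_real r \<cdot>\<^sub>m g x) \<and>
     (\<forall>x \<in> cl_carrier d. \<forall>y \<in> cl_carrier d. g (cl_mult d eps x y) = g x * g y)"

definition is_subspace_vec :: "nat \<Rightarrow> complex vec set \<Rightarrow> bool" where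
  "is_subspace_vec n W \<longleftrightarrow> W \<subseteq> carrier_vec n \<and> 0\<^sub>v n \<in> W \<and>
     (\<forall>v \<in> W. \<forall>w \<in> W. v + w \<in> W) \<and> (\<forall>c. \<forall>v \<in> W. c \<cdot>\<^sub>v v \<in> W)"

definition irreducible_cl_rep :: "nat \<Rightarrow> (nat \<Rightarrow> real) \<Rightarrow> nat \<Rightarrow> (real cl \<Rightarrow> complex mat) \<Rightarrow> bool" where
  "irreducible_cl_rep d eps n g \<longleftrightarrow> n > 0 \<and>
     (\<forall>W. is_subspace_vec n W \<and> (\<forall>x \<in> cl_carrier d. \<forall>w \<in> W. g x *\<^sub>v w \<in> W)
        \<longrightarrow> W = {0\<^sub>v n} \<or> W = carrier_vec n)"

definition gammaC :: "nat \<Rightarrow> nat \<Rightarrow> (real cl \<Rightarrow> complex mat) \<Rightarrow> complex cl \<Rightarrow> complex mat" where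
  "gammaC d n g x = mat n n (\<lambda>(i,j). \<Sum>A\<in>Pow {..<d}. x A * g (cl_basis A) $$ (i,j))"

definition lipschitz_group :: "nat \<Rightarrow> nat \<Rightarrow> (real cl \<Rightarrow> complex mat) \<Rightarrow> complex mat set" where
  "lipschitz_group d n g = {\<phi> \<in> carrier_mat n n. \<exists>\<psi> \<in> carrier_mat n n.
      \<phi> * \<psi> = 1\<^sub>m n \<and> \<psi> * \<phi> = 1\<^sub>m n \<and>
      (\<lambda>v. \<phi> * g v * \<psi>) ` cl_vecs d = g ` cl_vecs d}"

text \<open>Matrices embedded into a function space (for the Euclidean/product topology).\<close>
definition mat_to_fun :: "nat \<Rightarrow> complex mat \<Rightarrow> (nat \<times> nat \<Rightarrow> complex)" where
  "mat_to_fun n M = (\<lambda>(i,j). if i < n \<and> j < n then M $$ (i,j) else 0)"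

end

theory Submission
  imports Defs "Jordan_Normal_Form.Spectral_Radius"
begin

(* For x in Gamma^s the element N(x) = x^rev x is even and commutes with every generator e_j,
   because x e_j x^{-1} is a vector and vectors are fixed by the reversion; hence N(x) is a
   nonzero scalar, and dividing x by sqrt |N(x)| lands in Spin^c.

   For the representation, Schur's lemma together with the trace orthogonality
   tr (e_A^{-1} e_B) = n [A = B] for even A, B makes gamma_C injective on the even part, and
   averaging X over the conjugations by the basis elements gives a completeness relation
   showing that gamma_C is onto End(S).  For odd d the pseudoscalar is central, so it acts as a
   nonzero scalar and exchanges odd and even elements: gamma_C is injective on the odd part
   too, and the even part alone maps onto End(S).  An even unit x therefore preserves V
   exactly when gamma_C x preserves gamma(V), which identifies Gamma^s with L_gamma.
   Finally, rescaling by the positive factor 1 / sqrt |N| along a straight line deforms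
   L_gamma onto the image of Spin^c. *)

section \<open>Signs of products of basis elements\<close>

definition inversions :: "nat set \<Rightarrow> nat set \<Rightarrow> (nat \<times> nat) set" where
  "inversions A B = {(a, b). a \<in> A \<and> b \<in> B \<and> b < a}"

lemma finite_inversions: "finite A \<Longrightarrow> finite B \<Longrightarrow> finite (inversions A B)"
  unfolding inversions_def by (rule finite_subset[of _ "A \<times> B"]) auto

lemma inversions_sym_diff_left:
  "inversions (sym_diff A B) E = sym_diff (inversions A E) (inversions B E)"
  unfolding inversions_def by auto

lemma inversions_sym_diff_right:
  "inversions A (sym_diff B E) = sym_diff (inversions A B) (inversions A E)"
  unfolding inversions_def by auto

lemma cl_sign_inversions: "cl_sign eps A B = (-1) ^ card (inversions A B) * (\<Prod>i\<in>A \<inter> B. eps i)"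
  unfolding cl_sign_def inversions_def by simp

lemma card_sym_diff:
  assumes "finite A" "finite B"
  shows "card (sym_diff A B) + 2 * card (A \<inter> B) = card A + card B"
proof -
  have "card (sym_diff A B) = card (A - B) + card (B - A)"
    by (rule card_Un_disjoint) (use assms in auto)
  moreover have "card (A - B) + card (A \<inter> B) = card A"
    using card_Int_Diff[OF assms(1), of B] by simp
  moreover have "card (B - A) + card (A \<inter> B) = card B"
    using card_Int_Diff[OF assms(2), of A] by (simp add: Int_commute)
  ultimately show ?thesis by simp
qed

lemma odd_card_sym_diff:
  "finite A \<Longrightarrow> finite B \<Longrightarrow> odd (card (sym_diff A B)) \<longleftrightarrow> odd (card A) \<noteq> odd (card B)"
  using card_sym_diff[of A B] by (metis even_add even_mult_iff even_numeral)

lemma neg_one_power_card_sym_diff: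
  "finite A \<Longrightarrow> finite B \<Longrightarrow> (-1::'a::ring_1) ^ card (sym_diff A B) = (-1) ^ card A * (-1) ^ card B"
  using odd_card_sym_diff[of A B] by (auto simp: minus_one_power_iff)

lemma neg_one_power_eqI: "even (m + k) \<Longrightarrow> (-1::'a::ring_1) ^ m = (-1) ^ k"
  by (auto simp: minus_one_power_iff)

lemma cl_sign_cocycle:
  assumes "finite A" "finite B" "finite E"
  shows "cl_sign eps A B * cl_sign eps (sym_diff A B) E
       = cl_sign eps A (sym_diff B E) * cl_sign eps B E"
proof -
  let ?s = "\<lambda>X Y. (-1::real) ^ card (inversions X Y)" and ?P = "\<lambda>X. \<Prod>i\<in>X. eps i"
  have s_left: "?s (sym_diff A B) E = ?s A E * ?s B E"
    unfolding inversions_sym_diff_left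
    by (rule neg_one_power_card_sym_diff) (simp_all add: assms finite_inversions)
  have s_right: "?s A (sym_diff B E) = ?s A B * ?s A E"
    unfolding inversions_sym_diff_right
    by (rule neg_one_power_card_sym_diff) (simp_all add: assms finite_inversions)
  have "?P (A \<inter> B) * ?P (sym_diff A B \<inter> E) = ?P ((A \<inter> B) \<union> (sym_diff A B \<inter> E))"
    by (rule prod.union_disjoint[symmetric]) (use assms in auto)
  also have "(A \<inter> B) \<union> (sym_diff A B \<inter> E) = (A \<inter> sym_diff B E) \<union> (B \<inter> E)"
    by blast
  also have "?P \<dots> = ?P (A \<inter> sym_diff B E) * ?P (B \<inter> E)"
    by (rule prod.union_disjoint) (use assms in auto)
  finally have P: "?P (A \<inter> B) * ?P (sym_diff A B \<inter> E) = ?P (A \<inter> sym_diff B E) * ?P (B \<inter> E)" .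
  have "cl_sign eps A B * cl_sign eps (sym_diff A B) E
      = (?s A B * ?s A E * ?s B E) * (?P (A \<inter> B) * ?P (sym_diff A B \<inter> E))"
    unfolding cl_sign_inversions s_left by (simp add: ac_simps)
  also have "\<dots> = cl_sign eps A (sym_diff B E) * cl_sign eps B E"
    unfolding P cl_sign_inversions s_right by (simp add: ac_simps)
  finally show ?thesis .
qed

lemma card_inversions_swap:
  assumes "finite A" "finite B"
  shows "card (inversions A B) + card (inversions B A) + card (A \<inter> B) = card A * card B"
proof -
  let ?flip = "\<lambda>(b, a). (a, b)" and ?diag = "\<lambda>a. (a, a)"
  have AB: "A \<times> B = (inversions A B \<union> ?flip ` inversions B A) \<union> ?diag ` (A \<inter> B)"
    unfolding inversions_def by (auto simp: image_iff)
  have fin: "finite (inversions A B)" "finite (inversions B A)"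
    using assms finite_inversions by auto
  have "card (A \<times> B) = card (inversions A B \<union> ?flip ` inversions B A) + card (?diag ` (A \<inter> B))"
    unfolding AB by (rule card_Un_disjoint) (use fin assms in \<open>auto simp: inversions_def\<close>)
  also have "card (inversions A B \<union> ?flip ` inversions B A) = card (inversions A B) + card (?flip ` inversions B A)"
    by (rule card_Un_disjoint) (use fin in \<open>auto simp: inversions_def\<close>)
  also have "card (?flip ` inversions B A) = card (inversions B A)"
    by (rule card_image) (auto simp: inj_on_def)
  also have "card (?diag ` (A \<inter> B)) = card (A \<inter> B)"
    by (rule card_image) (auto simp: inj_on_def)
  finally show ?thesis by (simp add: card_cartesian_product)
qed

lemma cl_sign_swap:
  assumes "finite A" "finite B"
  shows "cl_sign eps A B = (-1) ^ (card A * card B + card (A \<inter> B)) * cl_sign eps B A"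
proof -
  have "(-1::real) ^ card (inversions A B)
      = (-1) ^ (card A * card B + card (A \<inter> B)) * (-1) ^ card (inversions B A)"
    unfolding power_add[symmetric] by (rule neg_one_power_eqI) (use card_inversions_swap[OF assms] in presburger)
  then show ?thesis unfolding cl_sign_inversions by (simp add: Int_commute)
qed

lemma cl_sign_singleton_anticommute:
  assumes "finite B" "j \<in> B" "even (card B)"
  shows "cl_sign eps {j} B = - cl_sign eps B {j}"
  using cl_sign_swap[OF _ assms(1), of "{j}" eps] assms by (simp add: Int_absorb2)

lemma choose_two_add: "((a + b) choose 2) = (a choose 2) + (b choose 2) + a * b"
  by (induction b) (simp_all add: numeral_2_eq_2)

lemma cl_sign_reverse:
  assumes "finite A" "finite B"
  shows "(-1) ^ (card (sym_diff A B) choose 2) * cl_sign eps A B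
       = cl_sign eps B A * (-1) ^ (card A choose 2) * (-1) ^ (card B choose 2)"
proof -
  define c where "c = card (A \<inter> B)"
  obtain p q where p: "card A = c + p" and q: "card B = c + q"
    using card_mono[OF assms(1), of "A \<inter> B"] card_mono[OF assms(2), of "A \<inter> B"] unfolding c_def
    by (metis inf_le1 inf_le2 le_add_diff_inverse)
  have sd: "card (sym_diff A B) = p + q"
    using card_sym_diff[OF assms] p q unfolding c_def by simp
  have parity: "(card (sym_diff A B) choose 2) + (card A * card B + c) + ((card A choose 2) + (card B choose 2))
      = 2 * ((p choose 2) + (q choose 2) + p * q + (c choose 2) + c * p + c * q) + c * (c + 1)"
    unfolding sd p q choose_two_add by (simp add: algebra_simps)
  then have "(-1::real) ^ ((card (sym_diff A B) choose 2) + (card A * card B + c))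
      = (-1) ^ ((card A choose 2) + (card B choose 2))"
    by (intro neg_one_power_eqI) (unfold parity, simp)
  then show ?thesis
    unfolding cl_sign_swap[OF assms, of eps] c_def power_add by (simp add: ac_simps)
qed

section \<open>Clifford multiplication\<close>

lemma sum_collapse_sym_diff:
  assumes "finite P" "\<And>A B. A \<in> P \<Longrightarrow> B \<in> P \<Longrightarrow> sym_diff A B \<in> P"
  shows "(\<Sum>D\<in>P. \<Sum>A\<in>P. \<Sum>B\<in>P. if sym_diff A B = D then h A B D else (0::'a::comm_monoid_add))
       = (\<Sum>A\<in>P. \<Sum>B\<in>P. h A B (sym_diff A B))"
proof -
  have "(\<Sum>D\<in>P. \<Sum>A\<in>P. \<Sum>B\<in>P. if sym_diff A B = D then h A B D else 0)
      = (\<Sum>A\<in>P. \<Sum>B\<in>P. \<Sum>D\<in>P. if sym_diff A B = D then h A B D else 0)"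
    by (subst sum.swap, rule sum.cong[OF refl], rule sum.swap)
  also have "\<dots> = (\<Sum>A\<in>P. \<Sum>B\<in>P. h A B (sym_diff A B))"
    by (intro sum.cong refl) (use assms in \<open>simp add: sum.delta\<close>)
  finally show ?thesis .
qed

lemma cl_mult_carrier: "cl_mult d eps x y \<in> cl_carrier d"
  unfolding cl_carrier_def cl_mult_def by auto

lemma cl_mult_apply:
  "C \<subseteq> {..<d} \<Longrightarrow> cl_mult d eps x y C = (\<Sum>A\<in>Pow {..<d}. \<Sum>B\<in>Pow {..<d}.
     if sym_diff A B = C then of_real (cl_sign eps A B) * x A * y B else 0)"
  unfolding cl_mult_def by simp

lemma cl_mult_outside: "\<not> C \<subseteq> {..<d} \<Longrightarrow> cl_mult d eps x y C = 0"
  unfolding cl_mult_def by simp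

lemma cl_mult_zero_left: "cl_mult d eps (\<lambda>A. 0) y = (\<lambda>C. 0)"
  unfolding cl_mult_def by auto

lemma cl_mult_smult_left:
  fixes x y :: "'a::{comm_ring_1, real_algebra_1} cl"
  shows "cl_mult d eps (\<lambda>A. c * x A) y = (\<lambda>C. c * cl_mult d eps x y C)"
  unfolding cl_mult_def by (auto simp: algebra_simps sum_distrib_left intro!: ext sum.cong)

lemma cl_mult_smult_right:
  fixes x y :: "'a::{comm_ring_1, real_algebra_1} cl"
  shows "cl_mult d eps x (\<lambda>A. c * y A) = (\<lambda>C. c * cl_mult d eps x y C)"
  unfolding cl_mult_def by (auto simp: algebra_simps sum_distrib_left intro!: ext sum.cong)

lemma cl_mult_mult_left_eq_sum:
  fixes x y z :: "'a::{comm_ring_1, real_algebra_1} cl"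
  assumes C: "C \<subseteq> {..<d}"
  shows "cl_mult d eps (cl_mult d eps x y) z C
    = (\<Sum>A\<in>Pow {..<d}. \<Sum>B\<in>Pow {..<d}. \<Sum>E\<in>Pow {..<d}. if sym_diff (sym_diff A B) E = C
        then of_real (cl_sign eps A B * cl_sign eps (sym_diff A B) E) * x A * y B * z E else 0)"
proof -
  let ?P = "Pow {..<d}"
  have "cl_mult d eps (cl_mult d eps x y) z C = (\<Sum>E\<in>?P. \<Sum>D\<in>?P. \<Sum>A\<in>?P. \<Sum>B\<in>?P.
      if sym_diff A B = D then (if sym_diff D E = C
        then of_real (cl_sign eps D E) * (of_real (cl_sign eps A B) * x A * y B) * z E else 0) else 0)"
    unfolding cl_mult_apply[OF C] by (subst sum.swap)
      (auto simp: cl_mult_apply sum_distrib_left sum_distrib_right intro!: sum.cong)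
  also have "\<dots> = (\<Sum>E\<in>?P. \<Sum>A\<in>?P. \<Sum>B\<in>?P. if sym_diff (sym_diff A B) E = C
      then of_real (cl_sign eps (sym_diff A B) E) * (of_real (cl_sign eps A B) * x A * y B) * z E else 0)"
    by (intro sum.cong refl sum_collapse_sym_diff) auto
  also have "\<dots> = (\<Sum>A\<in>?P. \<Sum>B\<in>?P. \<Sum>E\<in>?P. if sym_diff (sym_diff A B) E = C
      then of_real (cl_sign eps A B * cl_sign eps (sym_diff A B) E) * x A * y B * z E else 0)"
    by (subst sum.swap, rule sum.cong[OF refl], subst sum.swap) (auto simp: algebra_simps intro!: sum.cong)
  finally show ?thesis .
qed

lemma cl_mult_mult_right_eq_sum:
  fixes x y z :: "'a::{comm_ring_1, real_algebra_1} cl"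
  assumes C: "C \<subseteq> {..<d}"
  shows "cl_mult d eps x (cl_mult d eps y z) C
    = (\<Sum>A\<in>Pow {..<d}. \<Sum>B\<in>Pow {..<d}. \<Sum>E\<in>Pow {..<d}. if sym_diff A (sym_diff B E) = C
        then of_real (cl_sign eps A (sym_diff B E) * cl_sign eps B E) * x A * y B * z E else 0)"
proof -
  let ?P = "Pow {..<d}"
  have "cl_mult d eps x (cl_mult d eps y z) C = (\<Sum>A\<in>?P. \<Sum>D\<in>?P. \<Sum>B\<in>?P. \<Sum>E\<in>?P.
      if sym_diff B E = D then (if sym_diff A D = C
        then of_real (cl_sign eps A D) * x A * (of_real (cl_sign eps B E) * y B * z E) else 0) else 0)"
    unfolding cl_mult_apply[OF C]
    by (auto simp: cl_mult_apply sum_distrib_left sum_distrib_right intro!: sum.cong)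
  also have "\<dots> = (\<Sum>A\<in>?P. \<Sum>B\<in>?P. \<Sum>E\<in>?P. if sym_diff A (sym_diff B E) = C
      then of_real (cl_sign eps A (sym_diff B E)) * x A * (of_real (cl_sign eps B E) * y B * z E) else 0)"
    by (intro sum.cong refl sum_collapse_sym_diff) auto
  also have "\<dots> = (\<Sum>A\<in>?P. \<Sum>B\<in>?P. \<Sum>E\<in>?P. if sym_diff A (sym_diff B E) = C
      then of_real (cl_sign eps A (sym_diff B E) * cl_sign eps B E) * x A * y B * z E else 0)"
    by (auto simp: algebra_simps intro!: sum.cong)
  finally show ?thesis .
qed

lemma cl_mult_assoc:
  fixes x y z :: "'a::{comm_ring_1, real_algebra_1} cl"
  shows "cl_mult d eps (cl_mult d eps x y) z = cl_mult d eps x (cl_mult d eps y z)"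
proof
  fix C
  show "cl_mult d eps (cl_mult d eps x y) z C = cl_mult d eps x (cl_mult d eps y z) C"
  proof (cases "C \<subseteq> {..<d}")
    case True
    have sd: "sym_diff (sym_diff A B) E = sym_diff A (sym_diff B E)" for A B E :: "nat set"
      by blast
    show ?thesis
      unfolding cl_mult_mult_left_eq_sum[OF True] cl_mult_mult_right_eq_sum[OF True] sd
      by (intro sum.cong refl) (auto simp: cl_sign_cocycle finite_subset)
  qed (simp add: cl_mult_outside)
qed

lemma cl_mult_basis_left:
  assumes B: "B \<subseteq> {..<d}" and C: "C \<subseteq> {..<d}"
  shows "cl_mult d eps (cl_basis B) y C = of_real (cl_sign eps B (sym_diff B C)) * y (sym_diff B C)"
proof -
  have "cl_mult d eps (cl_basis B) y C = (\<Sum>A\<in>Pow {..<d}. if A = B then (\<Sum>B'\<in>Pow {..<d}.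
      if B' = sym_diff B C then of_real (cl_sign eps B B') * y B' else 0) else 0)"
  proof (unfold cl_mult_apply[OF C], intro sum.cong refl)
    fix A
    have "sym_diff B B' = C \<longleftrightarrow> B' = sym_diff B C" for B' by blast
    then show "(\<Sum>B'\<in>Pow {..<d}. if sym_diff A B' = C then of_real (cl_sign eps A B') * cl_basis B A * y B' else 0)
      = (if A = B then (\<Sum>B'\<in>Pow {..<d}. if B' = sym_diff B C then of_real (cl_sign eps B B') * y B' else 0) else 0)"
      by (cases "A = B") (simp_all add: cl_basis_def)
  qed
  also have "\<dots> = of_real (cl_sign eps B (sym_diff B C)) * y (sym_diff B C)"
    using B C by (auto simp: sum.delta')
  finally show ?thesis .
qed

lemma cl_mult_basis_right:
  assumes B: "B \<subseteq> {..<d}" and C: "C \<subseteq> {..<d}"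
  shows "cl_mult d eps x (cl_basis B) C = of_real (cl_sign eps (sym_diff C B) B) * x (sym_diff C B)"
proof -
  have "cl_mult d eps x (cl_basis B) C = (\<Sum>A\<in>Pow {..<d}. if A = sym_diff C B then (\<Sum>B'\<in>Pow {..<d}.
      if B' = B then of_real (cl_sign eps A B) * x A else 0) else 0)"
  proof (unfold cl_mult_apply[OF C], intro sum.cong refl)
    fix A
    have "A = sym_diff C B \<Longrightarrow> sym_diff A B' = C \<longleftrightarrow> B' = B" for B' by blast
    moreover have "A \<noteq> sym_diff C B \<Longrightarrow> sym_diff A B' = C \<Longrightarrow> B' \<noteq> B" for B' by blast
    ultimately show "(\<Sum>B'\<in>Pow {..<d}. if sym_diff A B' = C then of_real (cl_sign eps A B') * x A * cl_basis B B' else 0)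
      = (if A = sym_diff C B then (\<Sum>B'\<in>Pow {..<d}. if B' = B then of_real (cl_sign eps A B) * x A else 0) else 0)"
      by (cases "A = sym_diff C B") (auto simp: cl_basis_def intro!: sum.neutral)
  qed
  also have "\<dots> = of_real (cl_sign eps (sym_diff C B) B) * x (sym_diff C B)"
    using B C by (auto simp: sum.delta')
  finally show ?thesis .
qed

lemma cl_mult_basis:
  assumes A: "A \<subseteq> {..<d}" and B: "B \<subseteq> {..<d}"
  shows "cl_mult d eps (cl_basis A) (cl_basis B) = (\<lambda>C. of_real (cl_sign eps A B) * cl_basis (sym_diff A B) C)"
proof
  fix C
  show "cl_mult d eps (cl_basis A) (cl_basis B) C = of_real (cl_sign eps A B) * cl_basis (sym_diff A B) C"
  proof (cases "C \<subseteq> {..<d}")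
    case True
    have "sym_diff A C = B \<longleftrightarrow> C = sym_diff A B" "sym_diff A (sym_diff A B) = B" by blast+
    then show ?thesis
      unfolding cl_mult_basis_left[OF A True] by (cases "C = sym_diff A B") (simp_all add: cl_basis_def)
  next
    case False
    then have "C \<noteq> sym_diff A B" using A B by blast
    with False show ?thesis by (simp add: cl_mult_outside cl_basis_def)
  qed
qed

lemma cl_mult_basis_empty_left: "cl_mult d eps (cl_basis {}) y C = (if C \<subseteq> {..<d} then y C else 0)"
  using cl_mult_basis_left[of "{}" d C eps y] by (simp add: cl_mult_outside cl_sign_def)

lemma cl_mult_basis_empty_right: "cl_mult d eps x (cl_basis {}) C = (if C \<subseteq> {..<d} then x C else 0)"
  using cl_mult_basis_right[of "{}" d C eps x] by (simp add: cl_mult_outside cl_sign_def)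

lemma cl_scal_eq_smult_basis: "cl_scal (c::'a::ring_1) = (\<lambda>A. c * cl_basis {} A)"
  unfolding cl_scal_def cl_basis_def by (rule ext) simp

lemma cl_mult_scal_left:
  fixes y :: "'a::{comm_ring_1, real_algebra_1} cl"
  assumes "y \<in> cl_carrier d"
  shows "cl_mult d eps (cl_scal c) y = (\<lambda>A. c * y A)"
  using assms unfolding cl_scal_eq_smult_basis cl_mult_smult_left cl_mult_basis_empty_left
  by (auto simp: cl_carrier_def)

lemma cl_mult_scal_right:
  fixes x :: "'a::{comm_ring_1, real_algebra_1} cl"
  assumes "x \<in> cl_carrier d"
  shows "cl_mult d eps x (cl_scal c) = (\<lambda>A. c * x A)"
  using assms unfolding cl_scal_eq_smult_basis cl_mult_smult_right cl_mult_basis_empty_right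
  by (auto simp: cl_carrier_def)

lemma cl_left_inverse_eq_right_inverse:
  fixes x y z :: "'a::{comm_ring_1, real_algebra_1} cl"
  assumes "y \<in> cl_carrier d" "z \<in> cl_carrier d"
    and "cl_mult d eps y x = cl_scal 1" "cl_mult d eps x z = cl_scal 1"
  shows "y = z"
proof -
  have "y = cl_mult d eps y (cl_mult d eps x z)"
    using assms by (simp add: cl_mult_scal_right)
  also have "\<dots> = cl_mult d eps (cl_mult d eps y x) z"
    by (rule cl_mult_assoc[symmetric])
  also have "\<dots> = z"
    using assms by (simp add: cl_mult_scal_left)
  finally show ?thesis .
qed

lemma cl_inverse_eqI:
  assumes "y \<in> cl_carrier d" "cl_mult d eps x y = cl_scal 1" "cl_mult d eps y x = cl_scal 1"
  shows "cl_inverse d eps x = y"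
  unfolding cl_inverse_def by (rule the_equality) (use assms cl_left_inverse_eq_right_inverse in blast)+

lemma cl_units_inverse:
  assumes "x \<in> cl_units d eps"
  shows "cl_inverse d eps x \<in> cl_carrier d"
    and "cl_mult d eps x (cl_inverse d eps x) = cl_scal 1"
    and "cl_mult d eps (cl_inverse d eps x) x = cl_scal 1"
  using assms cl_inverse_eqI unfolding cl_units_def by auto

section \<open>Grading and reversion\<close>

definition cl_homogeneous :: "nat \<Rightarrow> bool \<Rightarrow> ('a::zero) cl set" where
  "cl_homogeneous d p = {x \<in> cl_carrier d. \<forall>A. x A \<noteq> 0 \<longrightarrow> odd (card A) = p}"

abbreviation cl_odd :: "nat \<Rightarrow> complex cl set" where
  "cl_odd d \<equiv> cl_homogeneous d True"

lemma cl_even_eq_homogeneous: "cl_even d = cl_homogeneous d False"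
  unfolding cl_even_def cl_homogeneous_def by auto

lemma cl_homogeneous_carrier: "x \<in> cl_homogeneous d p \<Longrightarrow> x \<in> cl_carrier d"
  unfolding cl_homogeneous_def by auto

lemma cl_even_carrier: "x \<in> cl_even d \<Longrightarrow> x \<in> cl_carrier d"
  unfolding cl_even_def by auto

lemma cl_mult_homogeneous:
  assumes x: "x \<in> cl_homogeneous d p" and y: "y \<in> cl_homogeneous d q"
  shows "cl_mult d eps x y \<in> cl_homogeneous d (p \<noteq> q)"
  unfolding cl_homogeneous_def
proof (intro CollectI conjI allI impI cl_mult_carrier)
  fix C assume nz: "cl_mult d eps x y C \<noteq> 0"
  then have C: "C \<subseteq> {..<d}" using cl_mult_outside by blast
  have "\<exists>A\<in>Pow {..<d}. \<exists>B\<in>Pow {..<d}. sym_diff A B = C \<and> x A \<noteq> 0 \<and> y B \<noteq> 0"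
  proof (rule ccontr)
    assume none: "\<not> ?thesis"
    have "cl_mult d eps x y C = 0"
      unfolding cl_mult_apply[OF C]
    proof (intro sum.neutral ballI)
      fix A B assume "A \<in> Pow {..<d}" "B \<in> Pow {..<d}"
      with none have "sym_diff A B = C \<longrightarrow> x A = 0 \<or> y B = 0" by blast
      then show "(if sym_diff A B = C then of_real (cl_sign eps A B) * x A * y B else 0) = 0" by auto
    qed
    with nz show False ..
  qed
  then obtain A B where AB: "A \<subseteq> {..<d}" "B \<subseteq> {..<d}" "sym_diff A B = C" "x A \<noteq> 0" "y B \<noteq> 0"
    by blast
  have "odd (card A) = p" "odd (card B) = q"
    using AB(4,5) x y unfolding cl_homogeneous_def by auto
  then show "odd (card C) = (p \<noteq> q)"
    using odd_card_sym_diff[of A B] AB(1-3) finite_subset by auto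
qed

lemma cl_mult_even: "x \<in> cl_even d \<Longrightarrow> y \<in> cl_even d \<Longrightarrow> cl_mult d eps x y \<in> cl_even d"
  using cl_mult_homogeneous[of x d False y False] by (simp add: cl_even_eq_homogeneous)

lemma cl_par_even: "x \<in> cl_even d \<Longrightarrow> cl_par x = x"
  unfolding cl_par_def cl_even_def by (rule ext, case_tac "even (card A)") auto

lemma cl_rev_carrier: "x \<in> cl_carrier d \<Longrightarrow> cl_rev x \<in> cl_carrier d"
  unfolding cl_rev_def cl_carrier_def by auto

lemma cl_rev_even: "x \<in> cl_even d \<Longrightarrow> cl_rev x \<in> cl_even d"
  unfolding cl_rev_def cl_even_def cl_carrier_def by auto

lemma cl_rev_scal_one: "cl_rev (cl_scal 1) = cl_scal 1"
  unfolding cl_rev_def cl_scal_def by (auto intro!: ext)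

lemma cl_rev_vector: "v \<in> cl_vecs d \<Longrightarrow> cl_rev (cl_complexify v) = cl_complexify v"
  unfolding cl_rev_def cl_vecs_def cl_complexify_def by (rule ext, case_tac "card A = 1") auto

lemma cl_rev_smult_real: "cl_rev (\<lambda>A. complex_of_real r * x A) = (\<lambda>A. complex_of_real r * cl_rev x A)"
  unfolding cl_rev_def by (auto intro!: ext)

lemma cl_par_smult: "cl_par (\<lambda>A. c * x A) = (\<lambda>A. c * cl_par x A)"
  unfolding cl_par_def by (auto intro!: ext)

lemma cl_rev_mult: "cl_rev (cl_mult d eps x y) = cl_mult d eps (cl_rev y) (cl_rev x)"
proof
  fix C
  let ?P = "Pow {..<d}" and ?r = "\<lambda>A. (-1::complex) ^ (card A choose 2)"
  have rev: "cl_rev z A = ?r A * cnj (z A)" for z A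
    unfolding cl_rev_def choose_two by simp
  show "cl_rev (cl_mult d eps x y) C = cl_mult d eps (cl_rev y) (cl_rev x) C"
  proof (cases "C \<subseteq> {..<d}")
    case True
    have sign: "?r (sym_diff A B) * of_real (cl_sign eps A B) = of_real (cl_sign eps B A) * ?r A * ?r B"
      if "A \<in> ?P" "B \<in> ?P" for A B
      using arg_cong[OF cl_sign_reverse[of A B eps], of complex_of_real] that finite_subset by auto
    have "cl_rev (cl_mult d eps x y) C = (\<Sum>A\<in>?P. \<Sum>B\<in>?P. if sym_diff A B = C
        then ?r (sym_diff A B) * of_real (cl_sign eps A B) * cnj (x A) * cnj (y B) else 0)"
      unfolding rev cl_mult_apply[OF True] cnj_sum sum_distrib_left
      by (intro sum.cong refl) simp
    also have "\<dots> = (\<Sum>A\<in>?P. \<Sum>B\<in>?P. if sym_diff B A = C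
        then of_real (cl_sign eps B A) * (?r B * cnj (y B)) * (?r A * cnj (x A)) else 0)"
    proof (intro sum.cong refl)
      fix A B assume AB: "A \<in> ?P" "B \<in> ?P"
      have eq: "?r (sym_diff A B) * of_real (cl_sign eps A B) * cnj (x A) * cnj (y B)
          = (of_real (cl_sign eps B A) * ?r A * ?r B) * (cnj (x A) * cnj (y B))"
        unfolding sign[OF AB, symmetric] by (simp only: mult.assoc)
      have sd: "sym_diff B A = sym_diff A B" by blast
      show "(if sym_diff A B = C then ?r (sym_diff A B) * of_real (cl_sign eps A B) * cnj (x A) * cnj (y B) else 0)
          = (if sym_diff B A = C then of_real (cl_sign eps B A) * (?r B * cnj (y B)) * (?r A * cnj (x A)) else 0)"
        unfolding eq sd by (simp only: ac_simps)
    qed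
    also have "\<dots> = cl_mult d eps (cl_rev y) (cl_rev x) C"
      unfolding cl_mult_apply[OF True] rev by (rule sum.swap)
    finally show ?thesis .
  qed (simp add: cl_rev_def cl_mult_outside)
qed

lemma cl_complexify_vector_odd: "v \<in> cl_vecs d \<Longrightarrow> cl_complexify v \<in> cl_odd d"
  unfolding cl_vecs_def cl_homogeneous_def cl_carrier_def cl_complexify_def by auto

lemma cl_vecs_carrier: "v \<in> cl_vecs d \<Longrightarrow> v \<in> cl_carrier d"
  unfolding cl_vecs_def by auto

lemma cl_basis_carrier: "A \<subseteq> {..<d} \<Longrightarrow> cl_basis A \<in> cl_carrier d"
  unfolding cl_carrier_def cl_basis_def by auto

lemma cl_carrier_basis_expansion:
  fixes x :: "'a::ring_1 cl"
  assumes "x \<in> cl_carrier d"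
  shows "x = (\<lambda>C. \<Sum>A\<in>Pow {..<d}. x A * cl_basis A C)"
proof
  fix C
  have "(\<Sum>A\<in>Pow {..<d}. x A * cl_basis A C) = (\<Sum>A\<in>Pow {..<d}. if A = C then x C else 0)"
    by (intro sum.cong refl) (auto simp: cl_basis_def)
  then show "x C = (\<Sum>A\<in>Pow {..<d}. x A * cl_basis A C)"
    using assms unfolding cl_carrier_def by (auto simp: sum.delta')
qed

section \<open>The special Clifford group and Spin^c\<close>

lemma cl_sign_nonzero:
  "\<forall>i<d. eps i \<noteq> 0 \<Longrightarrow> A \<subseteq> {..<d} \<Longrightarrow> B \<subseteq> {..<d} \<Longrightarrow> cl_sign eps A B \<noteq> 0"
  unfolding cl_sign_def by (auto simp: prod_zero_iff finite_subset)

lemma cl_basis_vector: "j < d \<Longrightarrow> (cl_basis {j} :: real cl) \<in> cl_vecs d"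
  unfolding cl_vecs_def cl_carrier_def cl_basis_def by auto

lemma cl_complexify_basis: "cl_complexify (cl_basis A) = cl_basis A"
  unfolding cl_complexify_def cl_basis_def by auto

lemma cl_scal_one_even: "cl_scal 1 \<in> cl_even d"
  unfolding cl_even_def cl_carrier_def cl_scal_def by auto

lemma cl_N_even: "x \<in> cl_even d \<Longrightarrow> cl_N d eps x = cl_mult d eps (cl_rev x) x"
  unfolding cl_N_def cl_tilde_rev_def by (simp add: cl_par_even)

lemma cl_N_empty:
  "cl_N d eps x {} = (\<Sum>A\<in>Pow {..<d}. of_real (cl_sign eps A A) * cl_tilde_rev x A * x A)"
proof -
  have "sym_diff A B = {} \<longleftrightarrow> B = A" for A B :: "nat set" by blast
  then show ?thesis
    unfolding cl_N_def cl_mult_apply[OF empty_subsetI] by (simp add: sum.delta')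
qed

lemma special_clifford_groupD:
  assumes "x \<in> special_clifford_group d eps"
  shows "x \<in> cl_even d" "x \<in> cl_units d eps"
    and "cl_inverse d eps x \<in> cl_carrier d"
    and "cl_mult d eps x (cl_inverse d eps x) = cl_scal 1"
    and "cl_mult d eps (cl_inverse d eps x) x = cl_scal 1"
    and "tilde_Ad d eps x ` cl_complexify ` cl_vecs d = cl_complexify ` cl_vecs d"
  using assms cl_units_inverse[of x d eps]
  unfolding special_clifford_group_def clifford_group_def by auto

lemma special_clifford_group_smult:
  assumes x: "x \<in> special_clifford_group d eps" and c: "c \<noteq> 0"
  shows "(\<lambda>A. c * x A) \<in> special_clifford_group d eps"
proof -
  note X = special_clifford_groupD[OF x]
  let ?y = "\<lambda>A. c * x A" and ?yi = "\<lambda>A. inverse c * cl_inverse d eps x A"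
  have yi: "?yi \<in> cl_carrier d" using X(3) unfolding cl_carrier_def by auto
  have y_yi: "cl_mult d eps ?y ?yi = cl_scal 1" and yi_y: "cl_mult d eps ?yi ?y = cl_scal 1"
    unfolding cl_mult_smult_left cl_mult_smult_right X(4,5) using c by (auto simp: cl_scal_def)
  have "?y \<in> cl_carrier d" using cl_even_carrier[OF X(1)] unfolding cl_carrier_def by auto
  then have "?y \<in> cl_units d eps"
    using yi y_yi yi_y unfolding cl_units_def by blast
  moreover have "tilde_Ad d eps ?y = tilde_Ad d eps x"
    unfolding tilde_Ad_def cl_inverse_eqI[OF yi y_yi yi_y] cl_par_smult cl_mult_smult_left cl_mult_smult_right
    using c by (simp add: fun_eq_iff)
  moreover have "?y \<in> cl_even d" using X(1) unfolding cl_even_def cl_carrier_def by auto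
  ultimately show ?thesis
    using X(6) unfolding special_clifford_group_def clifford_group_def by auto
qed

lemma cl_rev_mult_rev_inverse:
  "x \<in> special_clifford_group d eps
    \<Longrightarrow> cl_mult d eps (cl_rev x) (cl_rev (cl_inverse d eps x)) = cl_scal 1"
  using cl_rev_mult[of d eps "cl_inverse d eps x" x] special_clifford_groupD(5) cl_rev_scal_one by simp

text \<open>The vector x e_j x^{-1} is fixed by the reversion, i.e.
  (x^{-1})^rev e_j x^rev = x e_j x^{-1}; this is what makes x^rev x commute with e_j.\<close>

lemma rev_mult_self_commute_generator:
  assumes x: "x \<in> special_clifford_group d eps" and j: "j < d"
  shows "cl_mult d eps (cl_basis {j}) (cl_mult d eps (cl_rev x) x)
       = cl_mult d eps (cl_mult d eps (cl_rev x) x) (cl_basis {j})"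
proof -
  note X = special_clifford_groupD[OF x]
  let ?m = "cl_mult d eps" and ?xi = "cl_inverse d eps x"
  define v :: "complex cl" where "v = cl_basis {j}"
  have v: "v \<in> cl_complexify ` cl_vecs d" "cl_rev v = v"
    unfolding v_def using cl_basis_vector[OF j] cl_rev_vector cl_complexify_basis
    by (metis image_eqI, metis)
  define w where "w = ?m (?m x v) ?xi"
  have "w \<in> cl_complexify ` cl_vecs d"
    using X(6) v(1) unfolding w_def tilde_Ad_def cl_par_even[OF X(1)] by blast
  then have "cl_rev w = w" using cl_rev_vector by blast
  then have w_rev: "?m (cl_rev ?xi) (?m v (cl_rev x)) = w"
    unfolding w_def cl_rev_mult v(2) .
  have "?m (?m (cl_rev x) x) v = ?m (cl_rev x) (?m (?m x v) (?m ?xi x))"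
    unfolding X(5) cl_mult_scal_right[OF cl_mult_carrier] by (simp add: cl_mult_assoc)
  also have "\<dots> = ?m (cl_rev x) (?m w x)"
    unfolding w_def by (simp add: cl_mult_assoc)
  also have "\<dots> = ?m (?m (cl_rev x) (cl_rev ?xi)) (?m v (?m (cl_rev x) x))"
    unfolding w_rev[symmetric] by (simp add: cl_mult_assoc)
  also have "\<dots> = ?m v (?m (cl_rev x) x)"
    unfolding cl_rev_mult_rev_inverse[OF x] by (simp add: cl_mult_scal_left cl_mult_carrier)
  finally show ?thesis unfolding v_def ..
qed

locale nondegenerate_quadratic_form =
  fixes d :: nat and eps :: "nat \<Rightarrow> real"
  assumes eps_nonzero: "\<forall>i<d. eps i \<noteq> 0"
begin

lemma sign_nonzero: "A \<subseteq> {..<d} \<Longrightarrow> B \<subseteq> {..<d} \<Longrightarrow> cl_sign eps A B \<noteq> 0"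
  using cl_sign_nonzero eps_nonzero by blast

text \<open>For nonempty even A and j \<in> A the generator e_j anticommutes with e_A, so commuting
  with e_j forces the coefficient of e_A to vanish.\<close>

lemma even_commuting_with_generators_is_scalar:
  assumes y: "y \<in> cl_even d"
    and comm: "\<forall>j<d. cl_mult d eps (cl_basis {j}) y = cl_mult d eps y (cl_basis {j})"
  shows "y = cl_scal (y {})"
proof
  fix A
  show "y A = cl_scal (y {}) A"
  proof (cases "A \<noteq> {} \<and> A \<subseteq> {..<d} \<and> even (card A)")
    case True
    then obtain j where j: "j \<in> A" and A: "A \<subseteq> {..<d}" and ev: "even (card A)" by auto
    then have jd: "{j} \<subseteq> {..<d}" by auto
    have C: "A - {j} \<subseteq> {..<d}" and sd: "sym_diff {j} (A - {j}) = A" "sym_diff (A - {j}) {j} = A"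
      using A j by auto
    have "cl_mult d eps (cl_basis {j}) y (A - {j}) = cl_mult d eps y (cl_basis {j}) (A - {j})"
      using comm jd by simp
    then have "of_real (cl_sign eps {j} A) * y A = of_real (cl_sign eps A {j}) * y A"
      unfolding cl_mult_basis_left[OF jd C] cl_mult_basis_right[OF jd C] sd .
    moreover have "cl_sign eps {j} A = - cl_sign eps A {j}"
      using cl_sign_singleton_anticommute[OF finite_subset[OF A] j ev] by simp
    ultimately show ?thesis
      using sign_nonzero[OF A jd] True by (simp add: cl_scal_def)
  qed (use y in \<open>auto simp: cl_scal_def cl_even_def cl_carrier_def\<close>)
qed

lemma cl_N_scalar:
  assumes x: "x \<in> special_clifford_group d eps"
  shows "\<exists>c. c \<noteq> 0 \<and> cl_N d eps x = cl_scal c"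
proof -
  note X = special_clifford_groupD[OF x]
  let ?m = "cl_mult d eps" and ?xi = "cl_inverse d eps x"
  define N where "N = ?m (cl_rev x) x"
  have N: "N = cl_scal (N {})"
    unfolding N_def
    by (rule even_commuting_with_generators_is_scalar[OF cl_mult_even[OF cl_rev_even[OF X(1)] X(1)]])
      (use rev_mult_self_commute_generator[OF x] in blast)
  have "?m N (?m ?xi (cl_rev ?xi)) = ?m (cl_rev x) (?m (?m x ?xi) (cl_rev ?xi))"
    unfolding N_def by (simp add: cl_mult_assoc)
  also have "\<dots> = cl_scal 1"
    unfolding X(4) using cl_rev_mult_rev_inverse[OF x] by (simp add: cl_mult_scal_left cl_rev_carrier X(3))
  finally have inv: "?m N (?m ?xi (cl_rev ?xi)) = cl_scal 1" .
  have "N {} \<noteq> 0"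
  proof
    assume "N {} = 0"
    then have "N = (\<lambda>A. 0)" using N by (simp add: cl_scal_def fun_eq_iff)
    with inv have "cl_scal 1 {} = (0::complex)" using cl_mult_zero_left by metis
    then show False by (simp add: cl_scal_def)
  qed
  then show ?thesis using N cl_N_even[OF X(1)] unfolding N_def by auto
qed

definition spinc_scale :: "complex cl \<Rightarrow> real" where
  "spinc_scale x = 1 / sqrt (cmod (cl_N d eps x {}))"

lemma spinc_scale:
  assumes x: "x \<in> special_clifford_group d eps"
  shows "spinc_scale x > 0" and "(\<lambda>A. complex_of_real (spinc_scale x) * x A) \<in> spinc d eps"
proof -
  obtain c where c: "c \<noteq> 0" "cl_N d eps x = cl_scal c" using cl_N_scalar[OF x] by auto
  let ?r = "spinc_scale x"
  have r: "?r = 1 / sqrt (cmod c)" unfolding spinc_scale_def c(2) by (simp add: cl_scal_def)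
  then show r_pos: "?r > 0" using c(1) by simp
  let ?s = "\<lambda>A. complex_of_real ?r * x A"
  have s: "?s \<in> special_clifford_group d eps"
    by (rule special_clifford_group_smult[OF x]) (use r_pos in simp)
  have N: "cl_N d eps ?s = cl_scal (complex_of_real (?r * ?r) * c)"
    unfolding cl_N_even[OF special_clifford_groupD(1)[OF s]] cl_rev_smult_real cl_mult_smult_left
      cl_mult_smult_right cl_N_even[OF special_clifford_groupD(1)[OF x], symmetric] c(2)
    by (auto simp: cl_scal_def)
  have "cmod (complex_of_real (?r * ?r) * c) = ?r * ?r * cmod c"
    using r_pos by (simp add: norm_mult)
  also have "\<dots> = 1" unfolding r using c(1) by simp
  finally show "?s \<in> spinc d eps" unfolding spinc_def using s N by auto
qed

lemma spinc_scale_spinc: "s \<in> spinc d eps \<Longrightarrow> spinc_scale s = 1"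
  unfolding spinc_def spinc_scale_def by (auto simp: cl_scal_def)

theorem special_clifford_group_eq_spinc_times_Cx:
  "special_clifford_group d eps = spinc_times_Cx d eps"
proof
  show "special_clifford_group d eps \<subseteq> spinc_times_Cx d eps"
  proof
    fix x assume x: "x \<in> special_clifford_group d eps"
    let ?r = "spinc_scale x"
    let ?s = "\<lambda>A. complex_of_real ?r * x A"
    have "x = cl_mult d eps ?s (cl_scal (complex_of_real (1 / ?r)))"
      using spinc_scale(1)[OF x] special_clifford_groupD(1)[OF x]
      by (auto simp: cl_mult_scal_right cl_even_def cl_carrier_def)
    moreover have "complex_of_real (1 / ?r) \<noteq> 0" using spinc_scale(1)[OF x] by simp
    ultimately show "x \<in> spinc_times_Cx d eps"
      unfolding spinc_times_Cx_def using spinc_scale(2)[OF x] by blast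
  qed
  show "spinc_times_Cx d eps \<subseteq> special_clifford_group d eps"
    unfolding spinc_times_Cx_def spinc_def
    by (auto simp: cl_mult_scal_right cl_even_carrier special_clifford_groupD(1) mult.commute
        intro: special_clifford_group_smult)
qed

end

section \<open>Traces and entrywise sums of matrices\<close>

lemma index_mult_mat_square:
  assumes "A \<in> carrier_mat n n" "B \<in> carrier_mat n n" "i < n" "j < n"
  shows "(A * B) $$ (i, j) = (\<Sum>k<n. A $$ (i, k) * B $$ (k, j))"
  using assms by (simp add: scalar_prod_def atLeast0LessThan)

lemma smult_smult_mat: "a \<cdot>\<^sub>m (b \<cdot>\<^sub>m (A :: 'a::comm_semiring_1 mat)) = (a * b) \<cdot>\<^sub>m A"
  by (rule eq_matI) (auto simp: ac_simps)

lemma one_smult_mat: "(1::'a::semiring_1) \<cdot>\<^sub>m A = A"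
  by (rule eq_matI) auto

definition mat_trace :: "nat \<Rightarrow> 'a::comm_ring_1 mat \<Rightarrow> 'a" where
  "mat_trace n M = (\<Sum>i<n. M $$ (i, i))"

lemma mat_trace_mult_commute:
  assumes "A \<in> carrier_mat n n" "B \<in> carrier_mat n n"
  shows "mat_trace n (A * B) = mat_trace n (B * A)"
proof -
  have "mat_trace n (A * B) = (\<Sum>i<n. \<Sum>k<n. A $$ (i, k) * B $$ (k, i))"
    unfolding mat_trace_def by (intro sum.cong refl) (simp add: index_mult_mat_square[OF assms])
  also have "\<dots> = (\<Sum>k<n. \<Sum>i<n. B $$ (k, i) * A $$ (i, k))"
    by (subst sum.swap) (simp add: mult.commute)
  also have "\<dots> = mat_trace n (B * A)"
    unfolding mat_trace_def by (intro sum.cong refl) (simp add: index_mult_mat_square[OF assms(2,1)])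
  finally show ?thesis .
qed

lemma mat_trace_smult: "A \<in> carrier_mat n n \<Longrightarrow> mat_trace n (c \<cdot>\<^sub>m A) = c * mat_trace n A"
  unfolding mat_trace_def by (simp add: sum_distrib_left)

lemma mat_trace_one: "mat_trace n (1\<^sub>m n) = of_nat n"
  unfolding mat_trace_def by simp

text \<open>Matrices of type 'a mat do not form a comm_monoid_add, so families of n \<times> n
  matrices are summed entrywise.\<close>

definition mat_sum :: "nat \<Rightarrow> ('b \<Rightarrow> 'a::comm_monoid_add mat) \<Rightarrow> 'b set \<Rightarrow> 'a mat" where
  "mat_sum n f S = mat n n (\<lambda>(i, j). \<Sum>a\<in>S. f a $$ (i, j))"

lemma mat_sum_carrier [simp]: "mat_sum n f S \<in> carrier_mat n n"
  unfolding mat_sum_def by simp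

lemma index_mat_sum: "i < n \<Longrightarrow> j < n \<Longrightarrow> mat_sum n f S $$ (i, j) = (\<Sum>a\<in>S. f a $$ (i, j))"
  unfolding mat_sum_def by simp

lemma mult_mat_sum_left:
  fixes X :: "'a::comm_ring_1 mat"
  assumes X: "X \<in> carrier_mat n n" and f: "\<And>a. a \<in> S \<Longrightarrow> f a \<in> carrier_mat n n"
  shows "X * mat_sum n f S = mat_sum n (\<lambda>a. X * f a) S"
proof (rule eq_matI)
  fix i j assume "i < dim_row (mat_sum n (\<lambda>a. X * f a) S)" "j < dim_col (mat_sum n (\<lambda>a. X * f a) S)"
  then have i: "i < n" and j: "j < n" by (auto simp: mat_sum_def)
  have "(X * mat_sum n f S) $$ (i, j) = (\<Sum>k<n. X $$ (i, k) * (\<Sum>a\<in>S. f a $$ (k, j)))"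
    by (simp add: index_mult_mat_square[OF X mat_sum_carrier i j] index_mat_sum j)
  also have "\<dots> = (\<Sum>a\<in>S. \<Sum>k<n. X $$ (i, k) * f a $$ (k, j))"
    by (subst sum.swap) (simp add: sum_distrib_left)
  also have "\<dots> = mat_sum n (\<lambda>a. X * f a) S $$ (i, j)"
    by (simp add: index_mat_sum i j index_mult_mat_square[OF X f i j])
  finally show "(X * mat_sum n f S) $$ (i, j) = mat_sum n (\<lambda>a. X * f a) S $$ (i, j)" .
qed (use X in \<open>auto simp: mat_sum_def\<close>)

lemma mult_mat_sum_right:
  fixes X :: "'a::comm_ring_1 mat"
  assumes X: "X \<in> carrier_mat n n" and f: "\<And>a. a \<in> S \<Longrightarrow> f a \<in> carrier_mat n n"
  shows "mat_sum n f S * X = mat_sum n (\<lambda>a. f a * X) S"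
proof (rule eq_matI)
  fix i j assume "i < dim_row (mat_sum n (\<lambda>a. f a * X) S)" "j < dim_col (mat_sum n (\<lambda>a. f a * X) S)"
  then have i: "i < n" and j: "j < n" by (auto simp: mat_sum_def)
  have "(mat_sum n f S * X) $$ (i, j) = (\<Sum>k<n. (\<Sum>a\<in>S. f a $$ (i, k)) * X $$ (k, j))"
    by (simp add: index_mult_mat_square[OF mat_sum_carrier X i j] index_mat_sum i)
  also have "\<dots> = (\<Sum>a\<in>S. \<Sum>k<n. f a $$ (i, k) * X $$ (k, j))"
    by (subst sum.swap) (simp add: sum_distrib_right)
  also have "\<dots> = mat_sum n (\<lambda>a. f a * X) S $$ (i, j)"
    by (simp add: index_mat_sum i j index_mult_mat_square[OF f X i j])
  finally show "(mat_sum n f S * X) $$ (i, j) = mat_sum n (\<lambda>a. f a * X) S $$ (i, j)" .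
qed (use X in \<open>auto simp: mat_sum_def\<close>)

lemma mat_sum_cong: "(\<And>a. a \<in> S \<Longrightarrow> f a = h a) \<Longrightarrow> mat_sum n f S = mat_sum n h S"
  unfolding mat_sum_def by (auto intro!: sum.cong)

lemma mat_sum_reindex_bij_betw: "bij_betw k S S \<Longrightarrow> mat_sum n (\<lambda>a. f (k a)) S = mat_sum n f S"
  unfolding mat_sum_def using sum.reindex_bij_betw[of k S S "\<lambda>a. f a $$ _"]
  by (auto intro!: cong[of "mat n n"])

lemma mat_trace_mat_sum: "mat_trace n (mat_sum n f S) = (\<Sum>a\<in>S. mat_trace n (f a))"
  unfolding mat_trace_def by (simp add: index_mat_sum sum.swap[of _ "{..<n}"])

lemma eigenspace_subspace:
  assumes Y: "Y \<in> carrier_mat n n"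
  shows "is_subspace_vec n {w \<in> carrier_vec n. Y *\<^sub>v w = lam \<cdot>\<^sub>v w}"
  unfolding is_subspace_vec_def
proof (intro conjI ballI allI)
  show "0\<^sub>v n \<in> {w \<in> carrier_vec n. Y *\<^sub>v w = lam \<cdot>\<^sub>v w}"
    using Y by (auto intro!: eq_vecI simp: scalar_prod_def)
next
  fix a b assume "a \<in> {w \<in> carrier_vec n. Y *\<^sub>v w = lam \<cdot>\<^sub>v w}" "b \<in> {w \<in> carrier_vec n. Y *\<^sub>v w = lam \<cdot>\<^sub>v w}"
  then show "a + b \<in> {w \<in> carrier_vec n. Y *\<^sub>v w = lam \<cdot>\<^sub>v w}"
    using mult_add_distrib_mat_vec[OF Y] smult_add_distrib_vec[of a n b lam] by auto
next
  fix c a assume "a \<in> {w \<in> carrier_vec n. Y *\<^sub>v w = lam \<cdot>\<^sub>v w}"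
  then show "c \<cdot>\<^sub>v a \<in> {w \<in> carrier_vec n. Y *\<^sub>v w = lam \<cdot>\<^sub>v w}"
    using mult_mat_vec[OF Y, of a c] by (auto simp: smult_smult_assoc mult.commute)
qed auto

section \<open>Irreducible complex Clifford representations\<close>

locale irreducible_clifford_rep = nondegenerate_quadratic_form +
  fixes n :: nat and g :: "real cl \<Rightarrow> complex mat"
  assumes rep: "is_cl_rep d eps n g"
    and irreducible: "irreducible_cl_rep d eps n g"
begin

abbreviation gC :: "complex cl \<Rightarrow> complex mat" where
  "gC \<equiv> gammaC d n g"

definition basis_mat :: "nat set \<Rightarrow> complex mat" where
  "basis_mat A = g (cl_basis A)"

lemma n_pos: "n > 0"
  using irreducible unfolding irreducible_cl_rep_def by auto

lemma g_carrier: "x \<in> cl_carrier d \<Longrightarrow> g x \<in> carrier_mat n n"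
  and g_one: "g (cl_scal 1) = 1\<^sub>m n"
  and g_add: "x \<in> cl_carrier d \<Longrightarrow> y \<in> cl_carrier d \<Longrightarrow> g (\<lambda>A. x A + y A) = g x + g y"
  and g_smult: "x \<in> cl_carrier d \<Longrightarrow> g (\<lambda>A. r * x A) = complex_of_real r \<cdot>\<^sub>m g x"
  and g_mult: "x \<in> cl_carrier d \<Longrightarrow> y \<in> cl_carrier d \<Longrightarrow> g (cl_mult d eps x y) = g x * g y"
  using rep unfolding is_cl_rep_def by auto

lemma basis_mat_carrier: "A \<subseteq> {..<d} \<Longrightarrow> basis_mat A \<in> carrier_mat n n"
  unfolding basis_mat_def by (rule g_carrier[OF cl_basis_carrier])

lemma basis_mat_empty: "basis_mat {} = 1\<^sub>m n"
proof -
  have "(cl_basis {} :: real cl) = cl_scal 1" unfolding cl_basis_def cl_scal_def by auto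
  then show ?thesis unfolding basis_mat_def using g_one by simp
qed

lemma basis_mat_mult:
  assumes A: "A \<subseteq> {..<d}" and B: "B \<subseteq> {..<d}"
  shows "basis_mat A * basis_mat B = complex_of_real (cl_sign eps A B) \<cdot>\<^sub>m basis_mat (sym_diff A B)"
proof -
  have "sym_diff A B \<subseteq> {..<d}" using A B by auto
  moreover have "cl_mult d eps (cl_basis A) (cl_basis B)
      = (\<lambda>C. cl_sign eps A B * (cl_basis (sym_diff A B) :: real cl) C)"
    unfolding cl_mult_basis[OF A B] by simp
  ultimately show ?thesis
    unfolding basis_mat_def
    using g_mult[OF cl_basis_carrier[OF A] cl_basis_carrier[OF B]] g_smult[OF cl_basis_carrier] by metis
qed

lemma g_zero: "g (\<lambda>A. 0) = 0\<^sub>m n n"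
  using g_smult[of "cl_scal 1" 0] g_one unfolding cl_carrier_def cl_scal_def by auto

lemma g_sum_basis:
  assumes "S \<subseteq> Pow {..<d}"
  shows "g (\<lambda>C. \<Sum>A\<in>S. x A * cl_basis A C) \<in> carrier_mat n n \<and>
    (\<forall>i<n. \<forall>j<n. g (\<lambda>C. \<Sum>A\<in>S. x A * cl_basis A C) $$ (i, j) = (\<Sum>A\<in>S. complex_of_real (x A) * basis_mat A $$ (i, j)))"
proof -
  have "finite S" using assms finite_subset by blast
  then show ?thesis using assms
proof (induction S)
  case empty
  then show ?case using g_zero by simp
next
  case (insert a S)
  have a: "a \<subseteq> {..<d}" using insert by auto
  have xa: "(\<lambda>C. x a * cl_basis a C) \<in> cl_carrier d"
    using a unfolding cl_carrier_def cl_basis_def by auto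
  have xS: "(\<lambda>C. \<Sum>A\<in>S. x A * cl_basis A C) \<in> cl_carrier d"
    using insert(4) unfolding cl_carrier_def cl_basis_def by (auto intro!: sum.neutral)
  have "g (\<lambda>C. \<Sum>A\<in>insert a S. x A * cl_basis A C)
      = complex_of_real (x a) \<cdot>\<^sub>m basis_mat a + g (\<lambda>C. \<Sum>A\<in>S. x A * cl_basis A C)"
    using insert(1,2) g_add[OF xa xS] g_smult[OF cl_basis_carrier[OF a]] by (simp add: basis_mat_def)
  then show ?case using insert basis_mat_carrier[OF a] by auto
qed
qed

lemma gC_carrier: "gC x \<in> carrier_mat n n"
  unfolding gammaC_def by simp

lemma gC_dim [simp]: "dim_row (gC x) = n" "dim_col (gC x) = n"
  unfolding gammaC_def by auto

lemma index_gC: "i < n \<Longrightarrow> j < n \<Longrightarrow> gC x $$ (i, j) = (\<Sum>A\<in>Pow {..<d}. x A * basis_mat A $$ (i, j))"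
  unfolding gammaC_def basis_mat_def by simp

lemma g_eq_gC_complexify: "x \<in> cl_carrier d \<Longrightarrow> g x = gC (cl_complexify x)"
  using g_sum_basis[of "Pow {..<d}" x] cl_carrier_basis_expansion[of x d]
  by (intro eq_matI) (auto simp: index_gC cl_complexify_def)

lemma gC_basis: "A \<subseteq> {..<d} \<Longrightarrow> gC (cl_basis A) = basis_mat A"
  using g_eq_gC_complexify[OF cl_basis_carrier] cl_complexify_basis unfolding basis_mat_def by metis

lemma gC_smult: "gC (\<lambda>A. c * x A) = c \<cdot>\<^sub>m gC x"
  by (rule eq_matI) (auto simp: index_gC algebra_simps sum_distrib_left)

lemma gC_scal: "gC (cl_scal c) = c \<cdot>\<^sub>m 1\<^sub>m n"
  unfolding cl_scal_eq_smult_basis gC_smult gC_basis[OF empty_subsetI] basis_mat_empty ..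

lemma gC_add: "gC (\<lambda>A. x A + y A) = gC x + gC y"
  by (rule eq_matI) (auto simp: index_gC algebra_simps sum.distrib)

lemma gC_mult: "gC (cl_mult d eps x y) = gC x * gC y"
proof (rule eq_matI)
  fix i j assume "i < dim_row (gC x * gC y)" "j < dim_col (gC x * gC y)"
  then have i: "i < n" and j: "j < n" by auto
  let ?P = "Pow {..<d}"
  have "gC (cl_mult d eps x y) $$ (i, j) = (\<Sum>C\<in>?P. \<Sum>A\<in>?P. \<Sum>B\<in>?P. if sym_diff A B = C then
      of_real (cl_sign eps A B) * x A * y B * basis_mat C $$ (i, j) else 0)"
    unfolding index_gC[OF i j] by (intro sum.cong refl) (auto simp: cl_mult_apply sum_distrib_right intro!: sum.cong)
  also have "\<dots> = (\<Sum>A\<in>?P. \<Sum>B\<in>?P. of_real (cl_sign eps A B) * x A * y B * basis_mat (sym_diff A B) $$ (i, j))"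
    by (rule sum_collapse_sym_diff) auto
  also have "\<dots> = (\<Sum>A\<in>?P. \<Sum>B\<in>?P. \<Sum>k<n. x A * y B * (basis_mat A $$ (i, k) * basis_mat B $$ (k, j)))"
  proof (intro sum.cong refl)
    fix A B assume "A \<in> ?P" "B \<in> ?P"
    then have A: "A \<subseteq> {..<d}" and B: "B \<subseteq> {..<d}" and AB: "sym_diff A B \<subseteq> {..<d}" by auto
    show "of_real (cl_sign eps A B) * x A * y B * basis_mat (sym_diff A B) $$ (i, j)
        = (\<Sum>k<n. x A * y B * (basis_mat A $$ (i, k) * basis_mat B $$ (k, j)))"
    proof -
      have "of_real (cl_sign eps A B) * basis_mat (sym_diff A B) $$ (i, j)
          = (\<Sum>k<n. basis_mat A $$ (i, k) * basis_mat B $$ (k, j))"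
        using index_mult_mat_square[OF basis_mat_carrier[OF A] basis_mat_carrier[OF B] i j]
          basis_mat_carrier[OF AB] i j
        unfolding basis_mat_mult[OF A B] by simp
      then show ?thesis unfolding sum_distrib_left[symmetric] by (simp add: ac_simps)
    qed
  qed
  also have "\<dots> = (\<Sum>k<n. \<Sum>A\<in>?P. \<Sum>B\<in>?P. x A * y B * (basis_mat A $$ (i, k) * basis_mat B $$ (k, j)))"
    by (subst sum.swap, rule sum.cong[OF refl], rule sum.swap)
  also have "\<dots> = (\<Sum>k<n. (\<Sum>A\<in>?P. x A * basis_mat A $$ (i, k)) * (\<Sum>B\<in>?P. y B * basis_mat B $$ (k, j)))"
    by (intro sum.cong refl) (simp add: sum_product algebra_simps)
  also have "\<dots> = (gC x * gC y) $$ (i, j)"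
    by (simp add: index_mult_mat_square[OF gC_carrier gC_carrier i j] index_gC i j)
  finally show "gC (cl_mult d eps x y) $$ (i, j) = (gC x * gC y) $$ (i, j)" .
qed auto

lemma index_gC_mult_left:
  assumes Y: "Y \<in> carrier_mat n n" and i: "i < n" and j: "j < n"
  shows "(gC z * Y) $$ (i, j) = (\<Sum>A\<in>Pow {..<d}. z A * (basis_mat A * Y) $$ (i, j))"
proof -
  have B: "A \<in> Pow {..<d} \<Longrightarrow> basis_mat A \<in> carrier_mat n n" for A using basis_mat_carrier by auto
  have "(gC z * Y) $$ (i, j) = (\<Sum>k<n. (\<Sum>A\<in>Pow {..<d}. z A * basis_mat A $$ (i, k)) * Y $$ (k, j))"
    by (simp add: index_mult_mat_square[OF gC_carrier Y i j] index_gC i)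
  also have "\<dots> = (\<Sum>A\<in>Pow {..<d}. \<Sum>k<n. z A * (basis_mat A $$ (i, k) * Y $$ (k, j)))"
    by (subst sum.swap) (simp add: sum_distrib_right mult.assoc)
  also have "\<dots> = (\<Sum>A\<in>Pow {..<d}. z A * (basis_mat A * Y) $$ (i, j))"
    by (intro sum.cong refl) (simp add: index_mult_mat_square[OF B Y i j] sum_distrib_left)
  finally show ?thesis .
qed

lemma index_gC_mult_right:
  assumes Y: "Y \<in> carrier_mat n n" and i: "i < n" and j: "j < n"
  shows "(Y * gC z) $$ (i, j) = (\<Sum>A\<in>Pow {..<d}. z A * (Y * basis_mat A) $$ (i, j))"
proof -
  have B: "A \<in> Pow {..<d} \<Longrightarrow> basis_mat A \<in> carrier_mat n n" for A using basis_mat_carrier by auto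
  have "(Y * gC z) $$ (i, j) = (\<Sum>k<n. Y $$ (i, k) * (\<Sum>A\<in>Pow {..<d}. z A * basis_mat A $$ (k, j)))"
    by (simp add: index_mult_mat_square[OF Y gC_carrier i j] index_gC j)
  also have "\<dots> = (\<Sum>A\<in>Pow {..<d}. \<Sum>k<n. z A * (Y $$ (i, k) * basis_mat A $$ (k, j)))"
    by (subst sum.swap) (simp add: sum_distrib_left mult.left_commute)
  also have "\<dots> = (\<Sum>A\<in>Pow {..<d}. z A * (Y * basis_mat A) $$ (i, j))"
    by (intro sum.cong refl) (simp add: index_mult_mat_square[OF Y B i j] sum_distrib_left)
  finally show ?thesis .
qed

lemma gC_commute:
  assumes Y: "Y \<in> carrier_mat n n" and comm: "\<forall>A\<subseteq>{..<d}. basis_mat A * Y = Y * basis_mat A"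
  shows "gC z * Y = Y * gC z"
proof (rule eq_matI)
  fix i j assume "i < dim_row (Y * gC z)" "j < dim_col (Y * gC z)"
  then have i: "i < n" and j: "j < n" using Y by auto
  show "(gC z * Y) $$ (i, j) = (Y * gC z) $$ (i, j)"
    unfolding index_gC_mult_left[OF Y i j] index_gC_mult_right[OF Y i j] using comm by auto
qed (use Y in auto)

text \<open>An eigenspace of Y is invariant under the representation, hence by irreducibility it is
  the whole space.\<close>

lemma schur_lemma:
  assumes Y: "Y \<in> carrier_mat n n" and comm: "\<forall>A\<subseteq>{..<d}. basis_mat A * Y = Y * basis_mat A"
  shows "\<exists>c. Y = c \<cdot>\<^sub>m 1\<^sub>m n"
proof -
  obtain lam where "lam \<in> spectrum Y" using spectrum_non_empty[OF Y n_pos] by auto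
  then obtain v where "eigenvector Y v lam" unfolding spectrum_def eigenvalue_def by auto
  then have v: "v \<in> carrier_vec n" "v \<noteq> 0\<^sub>v n" "Y *\<^sub>v v = lam \<cdot>\<^sub>v v"
    unfolding eigenvector_def using Y by auto
  define W where "W = {w \<in> carrier_vec n. Y *\<^sub>v w = lam \<cdot>\<^sub>v w}"
  have "is_subspace_vec n W" unfolding W_def by (rule eigenspace_subspace[OF Y])
  moreover have "\<forall>x\<in>cl_carrier d. \<forall>w\<in>W. g x *\<^sub>v w \<in> W"
  proof (intro ballI)
    fix x :: "real cl" and w assume x: "x \<in> cl_carrier d" and w: "w \<in> W"
    have gx: "g x \<in> carrier_mat n n" by (rule g_carrier[OF x])
    have wc: "w \<in> carrier_vec n" and Yw: "Y *\<^sub>v w = lam \<cdot>\<^sub>v w" using w unfolding W_def by auto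
    have commute: "g x * Y = Y * g x"
      unfolding g_eq_gC_complexify[OF x] by (rule gC_commute[OF Y comm])
    have "Y *\<^sub>v (g x *\<^sub>v w) = (Y * g x) *\<^sub>v w" using Y gx wc by simp
    also have "\<dots> = g x *\<^sub>v (Y *\<^sub>v w)" unfolding commute[symmetric] using Y gx wc by simp
    also have "\<dots> = lam \<cdot>\<^sub>v (g x *\<^sub>v w)" unfolding Yw by (rule mult_mat_vec[OF gx wc])
    finally show "g x *\<^sub>v w \<in> W" unfolding W_def using gx wc by auto
  qed
  ultimately have "W = {0\<^sub>v n} \<or> W = carrier_vec n"
    using irreducible unfolding irreducible_cl_rep_def by blast
  moreover have "v \<in> W" using v unfolding W_def by auto
  ultimately have "unit_vec n j \<in> W" if "j < n" for j using v(2) that by auto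
  then have eig: "Y *\<^sub>v unit_vec n j = lam \<cdot>\<^sub>v unit_vec n j" if "j < n" for j
    using that unfolding W_def by auto
  have "Y = lam \<cdot>\<^sub>m 1\<^sub>m n"
  proof (rule eq_matI)
    fix i j assume "i < dim_row (lam \<cdot>\<^sub>m 1\<^sub>m n)" "j < dim_col (lam \<cdot>\<^sub>m 1\<^sub>m n)"
    then have i: "i < n" and j: "j < n" by auto
    have "(Y *\<^sub>v unit_vec n j) $ i = (lam \<cdot>\<^sub>v unit_vec n j) $ i" using eig[OF j] by simp
    then show "Y $$ (i, j) = (lam \<cdot>\<^sub>m 1\<^sub>m n) $$ (i, j)"
      using i j Y scalar_prod_right_unit[of j n "Matrix.row Y i"] by simp
  qed (use Y in auto)
  then show ?thesis by blast
qed

definition basis_mat_inv :: "nat set \<Rightarrow> complex mat" where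
  "basis_mat_inv A = complex_of_real (1 / cl_sign eps A A) \<cdot>\<^sub>m basis_mat A"

lemma basis_mat_inv_carrier: "A \<subseteq> {..<d} \<Longrightarrow> basis_mat_inv A \<in> carrier_mat n n"
  unfolding basis_mat_inv_def using basis_mat_carrier by simp

lemma basis_mat_square: "A \<subseteq> {..<d} \<Longrightarrow> basis_mat A * basis_mat A = complex_of_real (cl_sign eps A A) \<cdot>\<^sub>m 1\<^sub>m n"
  using basis_mat_mult[of A A] by (simp add: basis_mat_empty)

lemma basis_mat_mult_inv: "A \<subseteq> {..<d} \<Longrightarrow> basis_mat A * basis_mat_inv A = 1\<^sub>m n"
  unfolding basis_mat_inv_def using basis_mat_carrier[of A] sign_nonzero[of A A]
  by (simp add: mult_smult_distrib[of _ n n _ n] basis_mat_square smult_smult_mat one_smult_mat)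

lemma basis_mat_inv_mult: "A \<subseteq> {..<d} \<Longrightarrow> basis_mat_inv A * basis_mat A = 1\<^sub>m n"
  unfolding basis_mat_inv_def using basis_mat_carrier[of A] sign_nonzero[of A A]
  by (simp add: mult_smult_assoc_mat[of _ n n _ n] basis_mat_square smult_smult_mat one_smult_mat)

lemma basis_mat_inv_mult_inv:
  assumes B: "B \<subseteq> {..<d}" and C: "C \<subseteq> {..<d}"
  shows "basis_mat_inv B * basis_mat_inv C = complex_of_real (1 / cl_sign eps C B) \<cdot>\<^sub>m basis_mat_inv (sym_diff C B)"
proof -
  let ?D = "sym_diff C B" and ?s = "complex_of_real (cl_sign eps C B)"
  have D: "?D \<subseteq> {..<d}" using B C by auto
  let ?X = "basis_mat_inv B * basis_mat_inv C" and ?Y = "complex_of_real (1 / cl_sign eps C B) \<cdot>\<^sub>m basis_mat_inv ?D"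
  let ?A = "basis_mat C * basis_mat B"
  note carr = basis_mat_carrier[OF B] basis_mat_inv_carrier[OF B] basis_mat_carrier[OF C]
    basis_mat_inv_carrier[OF C] basis_mat_carrier[OF D] basis_mat_inv_carrier[OF D]
  have "?X * ?A = basis_mat_inv B * ((basis_mat_inv C * basis_mat C) * basis_mat B)"
    using carr by (simp add: assoc_mult_mat[of _ n n _ n _ n])
  also have "\<dots> = 1\<^sub>m n" using basis_mat_inv_mult[OF C] basis_mat_inv_mult[OF B] carr by simp
  finally have XA: "?X * ?A = 1\<^sub>m n" .
  have "?A * ?Y = (?s * complex_of_real (1 / cl_sign eps C B)) \<cdot>\<^sub>m (basis_mat ?D * basis_mat_inv ?D)"
    unfolding basis_mat_mult[OF C B] using carr
    by (simp add: mult_smult_assoc_mat[of _ n n _ n] mult_smult_distrib[of _ n n _ n] smult_smult_mat)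
  also have "\<dots> = 1\<^sub>m n" using sign_nonzero[OF C B] basis_mat_mult_inv[OF D] by (simp add: one_smult_mat)
  finally have AY: "?A * ?Y = 1\<^sub>m n" .
  have "?X = (?X * ?A) * ?Y" using AY carr by (simp add: assoc_mult_mat[of _ n n _ n _ n])
  then show ?thesis using XA carr by simp
qed

lemma basis_mat_anticommute:
  assumes B: "B \<subseteq> {..<d}" and j: "j \<in> B" and ev: "even (card B)"
  shows "basis_mat {j} * basis_mat B = (-1) \<cdot>\<^sub>m (basis_mat B * basis_mat {j})"
proof -
  have jd: "{j} \<subseteq> {..<d}" using B j by auto
  have "sym_diff {j} B = sym_diff B {j}" by auto
  moreover have "cl_sign eps {j} B = - cl_sign eps B {j}"
    using cl_sign_singleton_anticommute[OF finite_subset[OF B] j ev] by simp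
  ultimately show ?thesis
    unfolding basis_mat_mult[OF jd B] basis_mat_mult[OF B jd] by (simp add: smult_smult_mat)
qed

lemma mat_trace_basis_mat:
  assumes B: "B \<subseteq> {..<d}" and ne: "B \<noteq> {}" and ev: "even (card B)"
  shows "mat_trace n (basis_mat B) = 0"
proof -
  obtain j where j: "j \<in> B" using ne by auto
  have jd: "{j} \<subseteq> {..<d}" using B j by auto
  let ?e = "complex_of_real (cl_sign eps {j} {j})" and ?Gj = "basis_mat {j}" and ?GB = "basis_mat B"
  have carr: "?Gj \<in> carrier_mat n n" "?GB \<in> carrier_mat n n" using basis_mat_carrier jd B by auto
  have sq: "?GB * ?Gj * ?Gj = ?e \<cdot>\<^sub>m ?GB"
    using carr basis_mat_square[OF jd] by (simp add: mult_smult_distrib[of _ n n _ n])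
  have "mat_trace n (?Gj * (?GB * ?Gj)) = mat_trace n (?GB * ?Gj * ?Gj)"
    by (rule mat_trace_mult_commute) (use carr in auto)
  then have t1: "mat_trace n (?Gj * (?GB * ?Gj)) = ?e * mat_trace n ?GB"
    unfolding sq by (simp add: mat_trace_smult[OF carr(2)])
  have "?Gj * (?GB * ?Gj) = (-1) \<cdot>\<^sub>m (?GB * ?Gj * ?Gj)"
    using carr unfolding assoc_mult_mat[OF carr(1,2,1), symmetric] basis_mat_anticommute[OF B j ev]
    by (simp add: mult_smult_assoc_mat[of _ n n _ n])
  then have t2: "mat_trace n (?Gj * (?GB * ?Gj)) = - ?e * mat_trace n ?GB"
    unfolding sq by (simp add: smult_smult_mat mat_trace_smult[OF carr(2)])
  from t1 t2 sign_nonzero[OF jd jd] show ?thesis by simp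
qed

lemma mat_trace_basis_mat_inv_mult:
  assumes A: "A \<subseteq> {..<d}" and B: "B \<subseteq> {..<d}" and eA: "even (card A)" and eB: "even (card B)"
  shows "mat_trace n (basis_mat_inv A * basis_mat B) = (if A = B then of_nat n else 0)"
proof -
  have AB: "sym_diff A B \<subseteq> {..<d}" using A B by auto
  have "basis_mat_inv A * basis_mat B
      = complex_of_real (1 / cl_sign eps A A) \<cdot>\<^sub>m (complex_of_real (cl_sign eps A B) \<cdot>\<^sub>m basis_mat (sym_diff A B))"
    unfolding basis_mat_inv_def basis_mat_mult[OF A B, symmetric]
    using basis_mat_carrier A B by (simp add: mult_smult_assoc_mat[of _ n n _ n])
  then have tr: "mat_trace n (basis_mat_inv A * basis_mat B)
      = complex_of_real (1 / cl_sign eps A A) * (complex_of_real (cl_sign eps A B) * mat_trace n (basis_mat (sym_diff A B)))"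
    by (simp add: smult_smult_mat mat_trace_smult[OF basis_mat_carrier[OF AB]])
  show ?thesis
  proof (cases "A = B")
    case True
    then show ?thesis using tr sign_nonzero[OF A A] by (simp add: basis_mat_empty mat_trace_one)
  next
    case False
    moreover have "even (card (sym_diff A B))"
      using odd_card_sym_diff[of A B] A B eA eB finite_subset by auto
    ultimately show ?thesis using tr mat_trace_basis_mat[OF AB] by auto
  qed
qed

lemma mat_trace_mult_gC:
  assumes M: "M \<in> carrier_mat n n"
  shows "mat_trace n (M * gC x) = (\<Sum>B\<in>Pow {..<d}. x B * mat_trace n (M * basis_mat B))"
proof -
  have "mat_trace n (M * gC x) = (\<Sum>i<n. \<Sum>B\<in>Pow {..<d}. x B * (M * basis_mat B) $$ (i, i))"
    unfolding mat_trace_def by (intro sum.cong refl) (simp add: index_gC_mult_right[OF M])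
  then show ?thesis unfolding mat_trace_def by (simp add: sum.swap[of _ "{..<n}"] sum_distrib_left)
qed

lemma mat_trace_gC_even:
  assumes x: "x \<in> cl_even d" and A: "A \<subseteq> {..<d}" and eA: "even (card A)"
  shows "mat_trace n (basis_mat_inv A * gC x) = of_nat n * x A"
proof -
  have "mat_trace n (basis_mat_inv A * gC x) = (\<Sum>B\<in>Pow {..<d}. if B = A then x A * of_nat n else 0)"
    unfolding mat_trace_mult_gC[OF basis_mat_inv_carrier[OF A]]
  proof (intro sum.cong refl)
    fix B assume "B \<in> Pow {..<d}"
    then have B: "B \<subseteq> {..<d}" by auto
    show "x B * mat_trace n (basis_mat_inv A * basis_mat B) = (if B = A then x A * of_nat n else 0)"
    proof (cases "even (card B)")
      case True
      then show ?thesis using mat_trace_basis_mat_inv_mult[OF A B eA True] by auto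
    next
      case False
      then show ?thesis using x unfolding cl_even_def by auto
    qed
  qed
  also have "\<dots> = of_nat n * x A" using A by (simp add: sum.delta')
  finally show ?thesis .
qed

lemma gC_inj_on_even: "inj_on gC (cl_even d)"
proof (rule inj_onI, rule ext)
  fix x y A assume x: "x \<in> cl_even d" and y: "y \<in> cl_even d" and eq: "gC x = gC y"
  show "x A = y A"
  proof (cases "A \<subseteq> {..<d} \<and> even (card A)")
    case True
    then show ?thesis using mat_trace_gC_even[OF x] mat_trace_gC_even[OF y] eq n_pos by force
  next
    case False
    then have "x A = 0" "y A = 0" using x y unfolding cl_even_def cl_carrier_def by blast+
    then show ?thesis by simp
  qed
qed

definition average :: "complex mat \<Rightarrow> complex mat" where
  "average X = mat_sum n (\<lambda>B. basis_mat B * X * basis_mat_inv B) (Pow {..<d})"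

text \<open>Conjugating by e_C permutes the terms of the average (B \<mapsto> C \<triangle> B) up to
  signs that cancel.\<close>

lemma average_conj:
  assumes X: "X \<in> carrier_mat n n" and C: "C \<subseteq> {..<d}"
  shows "basis_mat C * average X * basis_mat_inv C = average X"
proof -
  let ?P = "Pow {..<d}"
  note GC = basis_mat_carrier[OF C] basis_mat_inv_carrier[OF C]
  have terms: "basis_mat B * X * basis_mat_inv B \<in> carrier_mat n n" if "B \<in> ?P" for B
    using that by (intro mult_carrier_mat) (use X basis_mat_carrier basis_mat_inv_carrier in auto)
  have left: "basis_mat C * average X = mat_sum n (\<lambda>B. basis_mat C * (basis_mat B * X * basis_mat_inv B)) ?P"
    unfolding average_def by (rule mult_mat_sum_left[OF GC(1)]) (rule terms)
  have "basis_mat C * average X * basis_mat_inv C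
      = mat_sum n (\<lambda>B. basis_mat C * (basis_mat B * X * basis_mat_inv B) * basis_mat_inv C) ?P"
    unfolding left by (rule mult_mat_sum_right[OF GC(2)]) (use terms GC in auto)
  also have "\<dots> = mat_sum n (\<lambda>B. basis_mat (sym_diff C B) * X * basis_mat_inv (sym_diff C B)) ?P"
  proof (rule mat_sum_cong)
    fix B assume "B \<in> ?P"
    then have B: "B \<subseteq> {..<d}" by auto
    let ?D = "sym_diff C B" and ?s = "complex_of_real (cl_sign eps C B)"
    have D: "?D \<subseteq> {..<d}" using B C by auto
    note carr = GC basis_mat_carrier[OF B] basis_mat_inv_carrier[OF B] basis_mat_carrier[OF D]
      basis_mat_inv_carrier[OF D]
    have "basis_mat C * (basis_mat B * X * basis_mat_inv B) * basis_mat_inv C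
        = (basis_mat C * basis_mat B) * X * (basis_mat_inv B * basis_mat_inv C)"
      using carr X by (simp add: assoc_mult_mat[of _ n n _ n _ n])
    also have "\<dots> = (?s * (1 / ?s)) \<cdot>\<^sub>m (basis_mat ?D * X * basis_mat_inv ?D)"
      unfolding basis_mat_mult[OF C B] basis_mat_inv_mult_inv[OF B C] using carr X
      by (simp add: mult_smult_assoc_mat[of _ n n _ n] mult_smult_distrib[of _ n n _ n] smult_smult_mat)
    also have "\<dots> = basis_mat ?D * X * basis_mat_inv ?D"
      using sign_nonzero[OF C B] by (simp add: one_smult_mat)
    finally show "basis_mat C * (basis_mat B * X * basis_mat_inv B) * basis_mat_inv C
        = basis_mat ?D * X * basis_mat_inv ?D" .
  qed
  also have "\<dots> = average X"
    unfolding average_def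
    by (rule mat_sum_reindex_bij_betw) (rule bij_betw_byWitness[where f' = "sym_diff C"], use C in auto)
  finally show ?thesis .
qed

lemma average_commute:
  assumes X: "X \<in> carrier_mat n n" and C: "C \<subseteq> {..<d}"
  shows "basis_mat C * average X = average X * basis_mat C"
proof -
  note GC = basis_mat_carrier[OF C] basis_mat_inv_carrier[OF C]
  have Av: "average X \<in> carrier_mat n n" unfolding average_def by simp
  have "basis_mat C * average X = (basis_mat C * average X * basis_mat_inv C) * basis_mat C"
    using GC Av basis_mat_inv_mult[OF C] by (simp add: assoc_mult_mat[of _ n n _ n _ n])
  then show ?thesis unfolding average_conj[OF X C] .
qed

lemma mat_trace_average:
  assumes X: "X \<in> carrier_mat n n"
  shows "mat_trace n (average X) = of_nat (2 ^ d) * mat_trace n X"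
proof -
  have "mat_trace n (basis_mat B * X * basis_mat_inv B) = mat_trace n X" if "B \<subseteq> {..<d}" for B
  proof -
    note carr = basis_mat_carrier[OF that] basis_mat_inv_carrier[OF that]
    have "mat_trace n (basis_mat B * X * basis_mat_inv B) = mat_trace n (basis_mat_inv B * (basis_mat B * X))"
      by (rule mat_trace_mult_commute) (use carr X in auto)
    also have "basis_mat_inv B * (basis_mat B * X) = X"
      using basis_mat_inv_mult[OF that] carr X by (simp add: assoc_mult_mat[of _ n n _ n _ n, symmetric])
    finally show ?thesis .
  qed
  then show ?thesis unfolding average_def mat_trace_mat_sum by (simp add: card_Pow)
qed

lemma average_eq_scalar:
  assumes X: "X \<in> carrier_mat n n"
  shows "average X = (of_nat (2 ^ d) * mat_trace n X / of_nat n) \<cdot>\<^sub>m 1\<^sub>m n"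
proof -
  obtain c where c: "average X = c \<cdot>\<^sub>m 1\<^sub>m n"
    using schur_lemma[of "average X"] average_commute[OF X] unfolding average_def by auto
  have "c * of_nat n = of_nat (2 ^ d) * mat_trace n X"
    using mat_trace_average[OF X] unfolding c by (simp add: mat_trace_smult mat_trace_one)
  then have "c = of_nat (2 ^ d) * mat_trace n X / of_nat n" using n_pos by (simp add: field_simps)
  then show ?thesis using c by simp
qed

text \<open>Applying average_eq_scalar to the matrix units E_jk yields the completeness relation of
  the basis matrices.\<close>

lemma basis_mat_completeness:
  assumes i: "i < n" and j: "j < n" and k: "k < n" and l: "l < n"
  shows "(\<Sum>B\<in>Pow {..<d}. basis_mat B $$ (i, j) * basis_mat_inv B $$ (k, l))
       = (if j = k \<and> i = l then of_nat (2 ^ d) / of_nat n else 0)"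
proof -
  define E :: "complex mat" where "E = mat n n (\<lambda>(p, q). if p = j \<and> q = k then 1 else 0)"
  have Ec: "E \<in> carrier_mat n n" unfolding E_def by simp
  have entry: "(basis_mat B * E * basis_mat_inv B) $$ (i, l) = basis_mat B $$ (i, j) * basis_mat_inv B $$ (k, l)"
    if B: "B \<subseteq> {..<d}" for B
  proof -
    note carr = basis_mat_carrier[OF B] basis_mat_inv_carrier[OF B]
    have "(basis_mat B * E) $$ (i, q) = (if q = k then basis_mat B $$ (i, j) else 0)" if q: "q < n" for q
      unfolding index_mult_mat_square[OF carr(1) Ec i q] using j q by (simp add: E_def if_distrib sum.delta cong: if_cong)
    then have "(basis_mat B * E * basis_mat_inv B) $$ (i, l)
        = (\<Sum>q<n. if q = k then basis_mat B $$ (i, j) * basis_mat_inv B $$ (k, l) else 0)"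
      unfolding index_mult_mat_square[OF mult_carrier_mat[OF carr(1) Ec] carr(2) i l]
      by (intro sum.cong refl) auto
    then show ?thesis using k by simp
  qed
  have trE: "mat_trace n E = (if j = k then 1 else 0)"
    unfolding mat_trace_def E_def using j by (simp add: sum.delta cong: if_cong)
  have "(\<Sum>B\<in>Pow {..<d}. basis_mat B $$ (i, j) * basis_mat_inv B $$ (k, l)) = average E $$ (i, l)"
    unfolding average_def index_mat_sum[OF i l] by (intro sum.cong refl) (auto simp: entry)
  also have "\<dots> = (if j = k \<and> i = l then of_nat (2 ^ d) / of_nat n else 0)"
    unfolding average_eq_scalar[OF Ec] using i l trE by auto
  finally show ?thesis .
qed

definition mat_coeffs :: "complex mat \<Rightarrow> complex cl" where
  "mat_coeffs M = (\<lambda>A. if A \<subseteq> {..<d} then of_nat n / of_nat (2 ^ d) * mat_trace n (basis_mat_inv A * M) else 0)"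

lemma mat_coeffs_carrier: "mat_coeffs M \<in> cl_carrier d"
  unfolding mat_coeffs_def cl_carrier_def by auto

lemma gC_mat_coeffs:
  assumes M: "M \<in> carrier_mat n n"
  shows "gC (mat_coeffs M) = M"
proof (rule eq_matI)
  fix i j assume "i < dim_row M" "j < dim_col M"
  then have i: "i < n" and j: "j < n" using M by auto
  let ?P = "Pow {..<d}" and ?c = "of_nat n / of_nat (2 ^ d) :: complex"
  have Bi: "A \<in> ?P \<Longrightarrow> basis_mat_inv A \<in> carrier_mat n n" for A using basis_mat_inv_carrier by auto
  have "gC (mat_coeffs M) $$ (i, j)
      = (\<Sum>A\<in>?P. ?c * (\<Sum>p<n. \<Sum>q<n. basis_mat_inv A $$ (p, q) * M $$ (q, p)) * basis_mat A $$ (i, j))"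
    unfolding index_gC[OF i j] mat_coeffs_def mat_trace_def
    by (intro sum.cong refl) (simp add: index_mult_mat_square[OF Bi M])
  also have "\<dots> = ?c * (\<Sum>p<n. \<Sum>q<n. M $$ (q, p) * (\<Sum>A\<in>?P. basis_mat A $$ (i, j) * basis_mat_inv A $$ (p, q)))"
    by (simp add: sum_distrib_left sum_distrib_right sum.swap[of _ ?P] ac_simps)
  also have "\<dots> = ?c * (\<Sum>p<n. if p = j then M $$ (i, j) * (of_nat (2 ^ d) / of_nat n) else 0)"
  proof (intro arg_cong[where f = "\<lambda>t. ?c * t"] sum.cong refl)
    fix p assume p: "p \<in> {..<n}"
    have "(\<Sum>q<n. M $$ (q, p) * (\<Sum>A\<in>?P. basis_mat A $$ (i, j) * basis_mat_inv A $$ (p, q)))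
        = (\<Sum>q<n. if q = i then (if p = j then M $$ (i, j) * (of_nat (2 ^ d) / of_nat n) else 0) else 0)"
      by (intro sum.cong refl) (use p i j in \<open>auto simp: basis_mat_completeness\<close>)
    then show "(\<Sum>q<n. M $$ (q, p) * (\<Sum>A\<in>?P. basis_mat A $$ (i, j) * basis_mat_inv A $$ (p, q)))
        = (if p = j then M $$ (i, j) * (of_nat (2 ^ d) / of_nat n) else 0)"
      using i by simp
  qed
  also have "\<dots> = M $$ (i, j)"
    using j n_pos by simp
  finally show "gC (mat_coeffs M) $$ (i, j) = M $$ (i, j)" .
qed (use M in auto)

lemma gC_one: "gC (cl_scal 1) = 1\<^sub>m n"
  using gC_scal[of 1] by (simp add: one_smult_mat)

definition even_coeffs :: "(nat \<times> nat \<Rightarrow> complex) \<Rightarrow> complex cl" where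
  "even_coeffs m = (\<lambda>A. if A \<subseteq> {..<d} \<and> even (card A)
     then (\<Sum>p<n. \<Sum>q<n. basis_mat_inv A $$ (p, q) * m (q, p)) / of_nat n else 0)"

lemma even_coeffs_mat_to_fun_gC:
  assumes x: "x \<in> cl_even d"
  shows "even_coeffs (mat_to_fun n (gC x)) = x"
proof
  fix A
  show "even_coeffs (mat_to_fun n (gC x)) A = x A"
  proof (cases "A \<subseteq> {..<d} \<and> even (card A)")
    case True
    then have A: "A \<subseteq> {..<d}" "even (card A)" by auto
    have "(\<Sum>p<n. \<Sum>q<n. basis_mat_inv A $$ (p, q) * mat_to_fun n (gC x) (q, p))
        = mat_trace n (basis_mat_inv A * gC x)"
      unfolding mat_trace_def
      by (intro sum.cong refl) (simp add: index_mult_mat_square[OF basis_mat_inv_carrier[OF A(1)] gC_carrier] mat_to_fun_def)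
    also have "\<dots> = of_nat n * x A" by (rule mat_trace_gC_even[OF x A])
    finally show ?thesis unfolding even_coeffs_def using True n_pos by simp
  next
    case False
    then show ?thesis using x unfolding even_coeffs_def cl_even_def cl_carrier_def by auto
  qed
qed

lemma continuous_on_even_coeffs: "continuous_on S (\<lambda>m. even_coeffs m A)"
proof (cases "A \<subseteq> {..<d} \<and> even (card A)")
  case True
  have "continuous_on S (\<lambda>m. m ij)" for ij :: "nat \<times> nat"
    by (rule continuous_on_subset[OF continuous_on_product_coordinates]) simp
  then have "continuous_on S (\<lambda>m. (\<Sum>p<n. \<Sum>q<n. basis_mat_inv A $$ (p, q) * m (q, p)) / of_nat n)"
    using n_pos by (intro continuous_intros) auto
  then show ?thesis using True unfolding even_coeffs_def by simp
next
  case False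
  have zero: "(\<lambda>m. even_coeffs m A) = (\<lambda>m. 0)"
    unfolding even_coeffs_def by (rule ext) (rule if_not_P[OF False])
  show ?thesis unfolding zero by (rule continuous_on_const)
qed

end


section \<open>Odd dimension: the Lipschitz group\<close>

locale odd_irreducible_clifford_rep = irreducible_clifford_rep +
  assumes odd_dim: "odd d"
begin

text \<open>In odd dimension the pseudoscalar e_{0..d-1} is central, so by Schur it acts as a
  nonzero scalar; multiplying by it exchanges odd and even elements.\<close>

lemma pseudoscalar_mat_scalar: "\<exists>\<mu>. \<mu> \<noteq> 0 \<and> basis_mat {..<d} = \<mu> \<cdot>\<^sub>m 1\<^sub>m n"
proof -
  have "\<forall>A\<subseteq>{..<d}. basis_mat A * basis_mat {..<d} = basis_mat {..<d} * basis_mat A"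
  proof (intro allI impI)
    fix A assume A: "A \<subseteq> {..<d}"
    have "even (d * card A + card A)" using odd_dim by simp
    then have "cl_sign eps {..<d} A = cl_sign eps A {..<d}"
      using cl_sign_swap[of "{..<d}" A eps] finite_subset[OF A] A by (simp add: Int_absorb1)
    moreover have "sym_diff {..<d} A = sym_diff A {..<d}" by auto
    ultimately show "basis_mat A * basis_mat {..<d} = basis_mat {..<d} * basis_mat A"
      unfolding basis_mat_mult[OF subset_refl A] basis_mat_mult[OF A subset_refl] by simp
  qed
  then obtain \<mu> where \<mu>: "basis_mat {..<d} = \<mu> \<cdot>\<^sub>m 1\<^sub>m n"
    using schur_lemma[OF basis_mat_carrier[OF subset_refl]] by auto
  have "1\<^sub>m n = \<mu> \<cdot>\<^sub>m basis_mat_inv {..<d}"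
    using basis_mat_mult_inv[of "{..<d}"] basis_mat_inv_carrier[of "{..<d}"] unfolding \<mu>
    by (simp add: mult_smult_assoc_mat[of _ n n _ n])
  then have "(1\<^sub>m n :: complex mat) $$ (0, 0) = (\<mu> \<cdot>\<^sub>m basis_mat_inv {..<d}) $$ (0, 0)" by simp
  then have "\<mu> \<noteq> 0" using n_pos basis_mat_inv_carrier[of "{..<d}"] by auto
  with \<mu> show ?thesis by blast
qed

lemma pseudoscalar_odd: "(cl_basis {..<d} :: complex cl) \<in> cl_odd d"
  unfolding cl_homogeneous_def cl_carrier_def cl_basis_def using odd_dim by auto

lemma cl_mult_odd_odd: "x \<in> cl_odd d \<Longrightarrow> y \<in> cl_odd d \<Longrightarrow> cl_mult d eps x y \<in> cl_even d"
  using cl_mult_homogeneous[of x d True y True] by (simp add: cl_even_eq_homogeneous)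

lemma gC_inj_on_odd: "inj_on gC (cl_odd d)"
proof (rule inj_onI)
  fix x y assume x: "x \<in> cl_odd d" and y: "y \<in> cl_odd d" and eq: "gC x = gC y"
  let ?F = "cl_basis {..<d} :: complex cl"
  have "cl_mult d eps ?F x = cl_mult d eps ?F y"
    by (rule inj_onD[OF gC_inj_on_even _ cl_mult_odd_odd[OF pseudoscalar_odd x] cl_mult_odd_odd[OF pseudoscalar_odd y]])
      (simp add: gC_mult eq)
  then have "cl_mult d eps (cl_mult d eps ?F ?F) x = cl_mult d eps (cl_mult d eps ?F ?F) y"
    by (simp add: cl_mult_assoc)
  moreover have "cl_mult d eps ?F ?F = cl_scal (of_real (cl_sign eps {..<d} {..<d}))"
    unfolding cl_mult_basis[OF subset_refl subset_refl] by (auto simp: cl_basis_def cl_scal_def)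
  ultimately show "x = y"
    using sign_nonzero[of "{..<d}" "{..<d}"] cl_homogeneous_carrier[OF x] cl_homogeneous_carrier[OF y]
    by (auto simp: cl_mult_scal_left fun_eq_iff)
qed

lemma gC_even_surj:
  assumes M: "M \<in> carrier_mat n n"
  shows "\<exists>x\<in>cl_even d. gC x = M"
proof -
  obtain \<mu> where \<mu>: "\<mu> \<noteq> 0" "basis_mat {..<d} = \<mu> \<cdot>\<^sub>m 1\<^sub>m n" using pseudoscalar_mat_scalar by blast
  let ?c = "mat_coeffs M"
  let ?even = "\<lambda>A. if even (card A) then ?c A else 0" and ?odd = "\<lambda>A. if odd (card A) then ?c A else 0"
  have even: "?even \<in> cl_even d" and odd: "?odd \<in> cl_odd d"
    using mat_coeffs_carrier[of M] unfolding cl_even_def cl_homogeneous_def cl_carrier_def by auto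
  let ?w = "cl_mult d eps (cl_basis {..<d}) ?odd"
  have w: "?w \<in> cl_even d" by (rule cl_mult_odd_odd[OF pseudoscalar_odd odd])
  have gw: "gC ?w = \<mu> \<cdot>\<^sub>m gC ?odd"
    unfolding gC_mult gC_basis[OF subset_refl] \<mu>(2) using gC_carrier[of ?odd]
    by (simp add: mult_smult_assoc_mat[of _ n n _ n])
  let ?x = "\<lambda>A. ?even A + inverse \<mu> * ?w A"
  have x: "?x \<in> cl_even d" using even w unfolding cl_even_def cl_carrier_def by auto
  have "gC ?x = gC ?even + inverse \<mu> \<cdot>\<^sub>m gC ?w" unfolding gC_add gC_smult ..
  also have "inverse \<mu> \<cdot>\<^sub>m gC ?w = gC ?odd"
    unfolding gw smult_smult_mat using \<mu>(1) by (simp add: one_smult_mat)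
  also have "gC ?even + gC ?odd = gC ?c"
    unfolding gC_add[symmetric] by (rule arg_cong[where f = gC]) auto
  also have "gC ?c = M" by (rule gC_mat_coeffs[OF M])
  finally show ?thesis using x by blast
qed

lemma gC_conj_vector:
  "v \<in> cl_vecs d \<Longrightarrow> gC (cl_mult d eps (cl_mult d eps x (cl_complexify v)) y) = gC x * g v * gC y"
  by (simp add: gC_mult g_eq_gC_complexify cl_vecs_carrier)

text \<open>The sandwich of a vector between even elements is odd, where gC is injective.\<close>

lemma sandwich_vector_eq_iff:
  assumes x: "x \<in> cl_even d" and y: "y \<in> cl_even d" and v: "v \<in> cl_vecs d" and w: "w \<in> cl_vecs d"
  shows "cl_mult d eps (cl_mult d eps x (cl_complexify v)) y = cl_complexify w \<longleftrightarrow> gC x * g v * gC y = g w"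
proof -
  let ?u = "cl_mult d eps (cl_mult d eps x (cl_complexify v)) y"
  have u: "?u \<in> cl_odd d"
    using cl_mult_homogeneous[OF cl_mult_homogeneous[OF x[unfolded cl_even_eq_homogeneous]
        cl_complexify_vector_odd[OF v]] y[unfolded cl_even_eq_homogeneous]] by simp
  have gu: "gC ?u = gC x * g v * gC y" by (rule gC_conj_vector[OF v])
  have gw: "g w = gC (cl_complexify w)" by (rule g_eq_gC_complexify[OF cl_vecs_carrier[OF w]])
  show ?thesis
  proof
    assume "?u = cl_complexify w"
    then show "gC x * g v * gC y = g w" using gu gw by simp
  next
    assume "gC x * g v * gC y = g w"
    then show "?u = cl_complexify w"
      by (intro inj_onD[OF gC_inj_on_odd _ u cl_complexify_vector_odd[OF w]]) (simp add: gu gw)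
  qed
qed

lemma gC_special_clifford_group_lipschitz:
  assumes x: "x \<in> special_clifford_group d eps"
  shows "gC x \<in> lipschitz_group d n g"
proof -
  note X = special_clifford_groupD[OF x]
  let ?xi = "cl_inverse d eps x"
  have "(\<lambda>v. gC x * g v * gC ?xi) ` cl_vecs d = (\<lambda>v. gC (tilde_Ad d eps x (cl_complexify v))) ` cl_vecs d"
    unfolding tilde_Ad_def cl_par_even[OF X(1)] using gC_conj_vector by simp
  also have "\<dots> = gC ` tilde_Ad d eps x ` cl_complexify ` cl_vecs d" by (simp add: image_image)
  also have "\<dots> = gC ` cl_complexify ` cl_vecs d" unfolding X(6) ..
  also have "\<dots> = g ` cl_vecs d" using g_eq_gC_complexify cl_vecs_carrier by (auto simp: image_iff)
  moreover have "gC x * gC ?xi = 1\<^sub>m n" "gC ?xi * gC x = 1\<^sub>m n"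
    unfolding gC_mult[symmetric] X(4,5) gC_one by simp_all
  ultimately show ?thesis
    unfolding lipschitz_group_def using gC_carrier by blast
qed

lemma lipschitz_group_in_gC_image:
  assumes phi: "phi \<in> lipschitz_group d n g"
  shows "\<exists>x\<in>special_clifford_group d eps. gC x = phi"
proof -
  obtain psi where carr: "phi \<in> carrier_mat n n" "psi \<in> carrier_mat n n"
    and inv: "phi * psi = 1\<^sub>m n" "psi * phi = 1\<^sub>m n"
    and conj: "(\<lambda>v. phi * g v * psi) ` cl_vecs d = g ` cl_vecs d"
    using phi unfolding lipschitz_group_def by auto
  obtain x y where x: "x \<in> cl_even d" "gC x = phi" and y: "y \<in> cl_even d" "gC y = psi"
    using gC_even_surj[OF carr(1)] gC_even_surj[OF carr(2)] by blast
  have xy: "cl_mult d eps x y = cl_scal 1" and yx: "cl_mult d eps y x = cl_scal 1"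
    using inj_onD[OF gC_inj_on_even] cl_mult_even x y cl_scal_one_even inv gC_one by (simp_all add: gC_mult)
  have "x \<in> cl_units d eps"
    using xy yx cl_even_carrier x(1) y(1) unfolding cl_units_def by blast
  have Ad: "tilde_Ad d eps x v = cl_mult d eps (cl_mult d eps x v) y" for v
    unfolding tilde_Ad_def cl_par_even[OF x(1)] cl_inverse_eqI[OF cl_even_carrier[OF y(1)] xy yx] ..
  have key: "tilde_Ad d eps x (cl_complexify v) = cl_complexify w \<longleftrightarrow> phi * g v * psi = g w"
    if "v \<in> cl_vecs d" "w \<in> cl_vecs d" for v w
    unfolding Ad x(2)[symmetric] y(2)[symmetric] by (rule sandwich_vector_eq_iff[OF x(1) y(1) that])
  have "tilde_Ad d eps x ` cl_complexify ` cl_vecs d = cl_complexify ` cl_vecs d"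
  proof (intro equalityI subsetI)
    fix u assume "u \<in> tilde_Ad d eps x ` cl_complexify ` cl_vecs d"
    then obtain v where v: "v \<in> cl_vecs d" and u: "u = tilde_Ad d eps x (cl_complexify v)" by auto
    have "phi * g v * psi \<in> g ` cl_vecs d" unfolding conj[symmetric] using v by blast
    then obtain w where "w \<in> cl_vecs d" "phi * g v * psi = g w" by blast
    then show "u \<in> cl_complexify ` cl_vecs d" using key[OF v] u by auto
  next
    fix u assume "u \<in> cl_complexify ` cl_vecs d"
    then obtain w where w: "w \<in> cl_vecs d" and u: "u = cl_complexify w" by auto
    have "g w \<in> (\<lambda>v. phi * g v * psi) ` cl_vecs d" unfolding conj using w by blast
    then obtain v where v: "v \<in> cl_vecs d" "phi * g v * psi = g w" by auto
    then have "u = tilde_Ad d eps x (cl_complexify v)" using key[OF v(1) w] u by simp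
    then show "u \<in> tilde_Ad d eps x ` cl_complexify ` cl_vecs d" using v(1) by blast
  qed
  with \<open>x \<in> cl_units d eps\<close> x show ?thesis
    unfolding special_clifford_group_def clifford_group_def by auto
qed

theorem gC_bij_betw_lipschitz: "bij_betw gC (special_clifford_group d eps) (lipschitz_group d n g)"
proof -
  have "inj_on gC (special_clifford_group d eps)"
    by (rule inj_on_subset[OF gC_inj_on_even]) (auto dest: special_clifford_groupD(1))
  moreover have "gC ` special_clifford_group d eps = lipschitz_group d n g"
    using gC_special_clifford_group_lipschitz lipschitz_group_in_gC_image by blast
  ultimately show ?thesis unfolding bij_betw_def ..
qed


abbreviation lipschitz_funs :: "(nat \<times> nat \<Rightarrow> complex) set" where
  "lipschitz_funs \<equiv> mat_to_fun n ` lipschitz_group d n g"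

lemma lipschitz_funsE:
  assumes "m \<in> lipschitz_funs"
  obtains x where "x \<in> special_clifford_group d eps" "m = mat_to_fun n (gC x)"
  using assms lipschitz_group_in_gC_image by blast

lemma even_coeffs_lipschitz:
  "x \<in> special_clifford_group d eps \<Longrightarrow> even_coeffs (mat_to_fun n (gC x)) = x"
  using even_coeffs_mat_to_fun_gC special_clifford_groupD(1) by blast

lemma mat_to_fun_smult: "M \<in> carrier_mat n n \<Longrightarrow> mat_to_fun n (k \<cdot>\<^sub>m M) = (\<lambda>ij. k * mat_to_fun n M ij)"
  unfolding mat_to_fun_def by (auto intro!: ext)

lemma lipschitz_funs_smult:
  assumes m: "m \<in> lipschitz_funs" and k: "k \<noteq> 0"
  shows "(\<lambda>ij. k * m ij) \<in> lipschitz_funs"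
proof -
  obtain x where x: "x \<in> special_clifford_group d eps" "m = mat_to_fun n (gC x)"
    using lipschitz_funsE[OF m] .
  have "(\<lambda>ij. k * m ij) = mat_to_fun n (gC (\<lambda>A. k * x A))"
    unfolding x(2) gC_smult mat_to_fun_smult[OF gC_carrier] ..
  then show ?thesis
    using gC_special_clifford_group_lipschitz[OF special_clifford_group_smult[OF x(1) k]] by auto
qed

text \<open>Reading the Clifford element off the matrix entries with even_coeffs is what makes the
  retraction continuous.\<close>

definition lipschitz_scale :: "(nat \<times> nat \<Rightarrow> complex) \<Rightarrow> real" where
  "lipschitz_scale m = spinc_scale (even_coeffs m)"

definition spinc_retraction :: "(nat \<times> nat \<Rightarrow> complex) \<Rightarrow> complex cl" where
  "spinc_retraction m = (\<lambda>A. complex_of_real (lipschitz_scale m) * even_coeffs m A)"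

lemma lipschitz_scale_pos: "m \<in> lipschitz_funs \<Longrightarrow> lipschitz_scale m > 0"
  by (erule lipschitz_funsE) (simp add: lipschitz_scale_def even_coeffs_lipschitz spinc_scale)

lemma spinc_retraction_spinc: "m \<in> lipschitz_funs \<Longrightarrow> spinc_retraction m \<in> spinc d eps"
  by (erule lipschitz_funsE) (simp add: spinc_retraction_def lipschitz_scale_def even_coeffs_lipschitz spinc_scale)

lemma spinc_special_clifford_group: "s \<in> spinc d eps \<Longrightarrow> s \<in> special_clifford_group d eps"
  unfolding spinc_def by auto

lemma mat_to_fun_gC_spinc: "s \<in> spinc d eps \<Longrightarrow> mat_to_fun n (gC s) \<in> lipschitz_funs"
  using gC_special_clifford_group_lipschitz spinc_special_clifford_group by blast

lemma spinc_retraction_gC: "s \<in> spinc d eps \<Longrightarrow> spinc_retraction (mat_to_fun n (gC s)) = s"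
  unfolding spinc_retraction_def lipschitz_scale_def
  using even_coeffs_lipschitz[OF spinc_special_clifford_group] spinc_scale_spinc by simp

lemma gC_spinc_retraction:
  "m \<in> lipschitz_funs \<Longrightarrow> mat_to_fun n (gC (spinc_retraction m)) = (\<lambda>ij. complex_of_real (lipschitz_scale m) * m ij)"
  by (erule lipschitz_funsE)
    (simp add: spinc_retraction_def lipschitz_scale_def even_coeffs_lipschitz gC_smult mat_to_fun_smult[OF gC_carrier])

lemma continuous_on_lipschitz_scale: "continuous_on lipschitz_funs lipschitz_scale"
proof -
  have "continuous_on lipschitz_funs (\<lambda>m. cl_N d eps (even_coeffs m) {})"
    unfolding cl_N_empty cl_tilde_rev_def cl_rev_def cl_par_def
    by (intro continuous_intros continuous_on_even_coeffs)
  moreover have "cl_N d eps (even_coeffs m) {} \<noteq> 0" if "m \<in> lipschitz_funs" for m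
  proof (rule lipschitz_funsE[OF that])
    fix x assume x: "x \<in> special_clifford_group d eps" and m: "m = mat_to_fun n (gC x)"
    obtain c where "c \<noteq> 0" "cl_N d eps x = cl_scal c" using cl_N_scalar[OF x] by auto
    then show "cl_N d eps (even_coeffs m) {} \<noteq> 0"
      unfolding m even_coeffs_lipschitz[OF x] by (simp add: cl_scal_def)
  qed
  ultimately show ?thesis
    unfolding lipschitz_scale_def spinc_scale_def by (intro continuous_intros) auto
qed

lemma continuous_on_spinc_retraction: "continuous_on lipschitz_funs spinc_retraction"
  unfolding spinc_retraction_def
  by (intro continuous_on_coordinatewise_then_product continuous_intros continuous_on_even_coeffs
      continuous_on_compose2[OF continuous_on_of_real_id continuous_on_lipschitz_scale]) auto

lemma continuous_on_mat_to_fun_gC: "continuous_on S (\<lambda>s. mat_to_fun n (gC s))"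
proof (rule continuous_on_coordinatewise_then_product)
  fix ij :: "nat \<times> nat"
  obtain i j where ij: "ij = (i, j)" by fastforce
  have "continuous_on S (\<lambda>s. s A)" for A :: "nat set"
    by (rule continuous_on_subset[OF continuous_on_product_coordinates]) simp
  then have "continuous_on S (\<lambda>s. \<Sum>A\<in>Pow {..<d}. s A * basis_mat A $$ (i, j))"
    by (intro continuous_intros) auto
  then show "continuous_on S (\<lambda>s. mat_to_fun n (gC s) ij)"
    unfolding mat_to_fun_def ij by (cases "i < n \<and> j < n") (auto simp: index_gC)
qed

text \<open>The straight-line homotopy between the identity and rescaling by lipschitz_scale stays
  inside the Lipschitz group because every intermediate factor is a positive real.\<close>

lemma homotopic_gC_spinc_retraction_id:
  "homotopic_with (\<lambda>x. True) (subtopology euclidean lipschitz_funs) (subtopology euclidean lipschitz_funs)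
     ((\<lambda>s. mat_to_fun n (gC s)) \<circ> spinc_retraction) id"
proof -
  let ?H = "\<lambda>p ij. complex_of_real ((1 - fst p) * lipschitz_scale (snd p) + fst p) * snd p ij"
  have H: "?H (t, m) \<in> lipschitz_funs" if t: "t \<in> {0..1}" and m: "m \<in> lipschitz_funs" for t m
  proof -
    have "(1 - t) * lipschitz_scale m + t > 0"
      using t lipschitz_scale_pos[OF m] by (cases "t = 0") (auto intro: add_nonneg_pos add_pos_nonneg)
    then have "complex_of_real ((1 - t) * lipschitz_scale m + t) \<noteq> 0"
      by (simp only: of_real_eq_0_iff)
    from lipschitz_funs_smult[OF m this] show ?thesis by simp
  qed
  have "continuous_on ({0..1} \<times> lipschitz_funs) (\<lambda>p. lipschitz_scale (snd p))"
    by (rule continuous_on_compose2[OF continuous_on_lipschitz_scale continuous_on_snd[OF continuous_on_id]]) auto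
  then have cont: "continuous_on ({0..1} \<times> lipschitz_funs) ?H"
    by (intro continuous_on_coordinatewise_then_product continuous_intros
        continuous_on_compose2[OF continuous_on_of_real_id]
        continuous_on_product_then_coordinatewise[OF continuous_on_snd[OF continuous_on_id]]) auto
  show ?thesis
  proof (subst homotopic_with, simp, intro exI conjI ballI)
    show "continuous_map (prod_topology (subtopology euclidean {0..1}) (subtopology euclidean lipschitz_funs))
        (subtopology euclidean lipschitz_funs) ?H"
      using cont H by auto
    fix m assume "m \<in> topspace (subtopology euclidean lipschitz_funs)"
    then have m: "m \<in> lipschitz_funs" by simp
    show "?H (0, m) = ((\<lambda>s. mat_to_fun n (gC s)) \<circ> spinc_retraction) m"
      using gC_spinc_retraction[OF m] by simp
    show "?H (1, m) = id m" by simp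
  qed simp
qed

theorem lipschitz_homotopy_equivalent_spinc:
  "subtopology euclidean lipschitz_funs homotopy_equivalent_space subtopology euclidean (spinc d eps)"
  unfolding homotopy_equivalent_space_def
proof (intro exI conjI)
  let ?r = spinc_retraction and ?e = "\<lambda>s. mat_to_fun n (gC s)"
  show r: "continuous_map (subtopology euclidean lipschitz_funs) (subtopology euclidean (spinc d eps)) ?r"
    using continuous_on_spinc_retraction spinc_retraction_spinc by auto
  show e: "continuous_map (subtopology euclidean (spinc d eps)) (subtopology euclidean lipschitz_funs) ?e"
    using continuous_on_mat_to_fun_gC mat_to_fun_gC_spinc by auto
  show "homotopic_with (\<lambda>x. True) (subtopology euclidean (spinc d eps)) (subtopology euclidean (spinc d eps))
      (?r \<circ> ?e) id"
    by (rule homotopic_with_equal) (use r e spinc_retraction_gC in \<open>auto intro: continuous_map_compose\<close>)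
  show "homotopic_with (\<lambda>x. True) (subtopology euclidean lipschitz_funs) (subtopology euclidean lipschitz_funs)
      (?e \<circ> ?r) id"
    by (rule homotopic_gC_spinc_retraction_id)
qed

end

theorem proposition4p5:
  fixes d n :: nat and eps :: "nat \<Rightarrow> real" and g :: "real cl \<Rightarrow> complex mat"
  assumes "odd d"
    and "\<forall>i < d. eps i \<noteq> 0"
    and "is_cl_rep d eps n g"
    and "irreducible_cl_rep d eps n g"
  shows "special_clifford_group d eps = spinc_times_Cx d eps
    \<and> bij_betw (gammaC d n g) (special_clifford_group d eps) (lipschitz_group d n g)
    \<and> (\<forall>x \<in> special_clifford_group d eps. \<forall>y \<in> special_clifford_group d eps.
          gammaC d n g (cl_mult d eps x y) = gammaC d n g x * gammaC d n g y)
    \<and> (subtopology euclidean (mat_to_fun n ` lipschitz_group d n g))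
          homotopy_equivalent_space (subtopology euclidean (spinc d eps))"
proof -
  interpret odd_irreducible_clifford_rep d eps n g
    by unfold_locales (use assms in auto)
  show ?thesis
    using special_clifford_group_eq_spinc_times_Cx gC_bij_betw_lipschitz gC_mult
      lipschitz_homotopy_equivalent_spinc by blast
qed

end
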